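(* For every $n\ge r\ge1$ there is a sequence $V_0,V_1,\dots,V_N$ of pointed vector configurations in $\mathbf{R}^{r\times n}$ in general position such that (1) $V_{t-1}$ and $V_t$ differ by a single mutation for each $1\le t\le N$, and (2) for every $1\le j\le\lfloor\frac{r-1}{2}\rfloor$ and $0\le k\le\lfloor\frac{n-r-1}{2}\rfloor$, some mutation $V_{t-1}\to V_t$ is of type $(j,k)$.
   Context: $[n]=\{1,\dots,n\}$. $V=[v_1|\cdots|v_n]\in\mathbf{R}^{r\times n}$ is in general position if any $r$ columns are linearly independent, and pointed if all columns lie in an open linear halfspace $\{x:\langle u,x\rangle>0\}$ for some $u\ne0$. For $F\in\{-1,0,+1\}^n$, $F_+,F_0,F_-$ are the sets of $i$ with $F_i=+1,0,-1$; $\mathcal{F}(V)$ is the set of sign vectors $(\operatorname{sgn}\langle v_1,u\rangle,\dots,\operatorname{sgn}\langle v_n,u\rangle)$, $u\ne0$. Two configurations $V,W$ in general position differ by a mutation if there is a continuous path $V(t)$, $t\in[0,1]$, $V(0)=V$, $V(1)=W$, and $t_0\in(0,1)$ such that $V(t)$ is in general position for $t\ne t_0$, at $t_0$ exactly one $r$-element set $R\subseteq[n]$ of columns is linearly dependent, all $(r-1)$-element sets of columns of $V(t_0)$ are linearly independent, and the sign of $\det[v_i(t)]_{i\in R}$ for $t<t_0$ is opposite to that for $t>t_0$. There is then $Y\in\{-1,+1\}^n$ such that the elements of $\{-1,+1\}^n$ in $\mathcal{F}(W)\setminus\mathcal{F}(V)$ are exactly $Y$ and $-Y$; with $a=|R\cap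 Y_-|$ and $b=|Y_-\setminus R|$, the mutation is of type $(a,b)\equiv(r-a,n-r-b)$, i.e., it is said to be of type $(a,b)$ and also of type $(r-a,n-r-b)$. *)

theory Defs
  imports Complex_Main "Jordan_Normal_Form.Determinant"
begin

text \<open>A vector configuration V in R^(r x n) is represented as
  V :: nat => nat => real, where V i k is the k-th coordinate (k in {1..r})
  of the i-th column v_i (i in {1..n}). Values outside these ranges are ignored.\<close>

type_synonym config = "nat \<Rightarrow> nat \<Rightarrow> real"

definition ip :: "nat \<Rightarrow> (nat \<Rightarrow> real) \<Rightarrow> (nat \<Rightarrow> real) \<Rightarrow> real" where
  "ip r x u = (\<Sum>k=1..r. x k * u k)"

definition nonzero_vec :: "nat \<Rightarrow> (nat \<Rightarrow> real) \<Rightarrow> bool" where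
  "nonzero_vec r u \<longleftrightarrow> (\<exists>k\<in>{1..r}. u k \<noteq> 0)"

definition lin_indep_cols :: "nat \<Rightarrow> config \<Rightarrow> nat set \<Rightarrow> bool" where
  "lin_indep_cols r V S \<longleftrightarrow>
     (\<forall>c :: nat \<Rightarrow> real. (\<forall>k\<in>{1..r}. (\<Sum>i\<in>S. c i * V i k) = 0) \<longrightarrow> (\<forall>i\<in>S. c i = 0))"

definition general_position :: "nat \<Rightarrow> nat \<Rightarrow> config \<Rightarrow> bool" where
  "general_position r n V \<longleftrightarrow>
     (\<forall>S. S \<subseteq> {1..n} \<and> card S = r \<longrightarrow> lin_indep_cols r V S)"

definition pointed :: "nat \<Rightarrow> nat \<Rightarrow> config \<Rightarrow> bool" where
  "pointed r n V \<longleftrightarrow> (\<exists>u. nonzero_vec r u \<and> (\<forall>i\<in>{1..n}. ip r (V i) u > 0))"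

definition signvecs :: "nat \<Rightarrow> nat \<Rightarrow> config \<Rightarrow> (nat \<Rightarrow> real) set" where
  "signvecs r n V = {(\<lambda>i. if i \<in> {1..n} then sgn (ip r (V i) u) else 0) | u. nonzero_vec r u}"

definition pm_vecs :: "nat \<Rightarrow> (nat \<Rightarrow> real) set" where
  "pm_vecs n = {Y. (\<forall>i\<in>{1..n}. Y i = 1 \<or> Y i = -1) \<and> (\<forall>i. i \<notin> {1..n} \<longrightarrow> Y i = 0)}"

definition det_cols :: "nat \<Rightarrow> config \<Rightarrow> nat set \<Rightarrow> real" where
  "det_cols r V R = det (mat r r (\<lambda>(k, j). V (sorted_list_of_set R ! j) (k + 1)))"

definition mutation_path :: "nat \<Rightarrow> nat \<Rightarrow> config \<Rightarrow> config \<Rightarrow> (real \<Rightarrow> config) \<Rightarrow> real \<Rightarrow> nat set \<Rightarrow> bool" where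
  "mutation_path r n V W P t0 R \<longleftrightarrow>
     (\<forall>i\<in>{1..n}. \<forall>k\<in>{1..r}. P 0 i k = V i k \<and> P 1 i k = W i k) \<and>
     (\<forall>i\<in>{1..n}. \<forall>k\<in>{1..r}. continuous_on {0..1} (\<lambda>t. P t i k)) \<and>
     t0 \<in> {0<..<1} \<and>
     (\<forall>t\<in>{0..1}. t \<noteq> t0 \<longrightarrow> general_position r n (P t)) \<and>
     R \<subseteq> {1..n} \<and> card R = r \<and> \<not> lin_indep_cols r (P t0) R \<and>
     (\<forall>S. S \<subseteq> {1..n} \<and> card S = r \<and> \<not> lin_indep_cols r (P t0) S \<longrightarrow> S = R) \<and>
     (\<forall>S. S \<subseteq> {1..n} \<and> card S = r - 1 \<longrightarrow> lin_indep_cols r (P t0) S) \<and>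
     (\<forall>s\<in>{0..<t0}. \<forall>s'\<in>{t0<..1}.
        sgn (det_cols r (P s) R) = - sgn (det_cols r (P s') R))"

definition differ_by_mutation :: "nat \<Rightarrow> nat \<Rightarrow> config \<Rightarrow> config \<Rightarrow> bool" where
  "differ_by_mutation r n V W \<longleftrightarrow> (\<exists>P t0 R. mutation_path r n V W P t0 R)"

definition mutation_of_type :: "nat \<Rightarrow> nat \<Rightarrow> config \<Rightarrow> config \<Rightarrow> nat \<Rightarrow> nat \<Rightarrow> bool" where
  "mutation_of_type r n V W a b \<longleftrightarrow>
     (\<exists>P t0 R Y. mutation_path r n V W P t0 R \<and> Y \<in> pm_vecs n \<and>
        (signvecs r n W - signvecs r n V) \<inter> pm_vecs n = {Y, (\<lambda>i. - Y i)} \<and>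
        (let Ym = {i\<in>{1..n}. Y i = -1} in
           (a = card (R \<inter> Ym) \<and> b = card (Ym - R)) \<or>
           (int a = int r - int (card (R \<inter> Ym)) \<and>
            int b = int n - int r - int (card (Ym - R)))))"

end

(* Let the first n - 1 columns be the moment vectors (1, i, ..., i^(r-1)) and let the last
   column x move. The configuration is in general position exactly when x lies on none of the
   walls spanned by r - 1 moment vectors, it is pointed when x_1 > 0, and moving x straight
   across a single wall is a mutation that flips the basis formed by the wall and the last
   column. After a generic perturbation a segment crosses the walls one at a time, so any two
   chambers in x_1 > 0 are joined by such mutations. Crossing the wall {1..r-2, k+r-1} near a
   point of it whose moment coefficients are positive exactly on 1..j creates only the sign
   vectors +-Y: every new sign vector has a signed circuit in the old configuration (Gordan's
   theorem), which must contain the flipped basis, and by Cramer's rule the circuits through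
   it carry the signs of Y, whose negative entries are 1..j and r-1..k+r-2. This crossing has
   type (j, k); walking from one such crossing to the next realises every type. *)
theory Submission
  imports Defs "HOL-Analysis.Function_Topology"
begin

section \<open>Linear relations among columns\<close>

definition lin_relation :: "nat \<Rightarrow> config \<Rightarrow> nat set \<Rightarrow> (nat \<Rightarrow> real) \<Rightarrow> bool" where
  "lin_relation r V T c \<longleftrightarrow> (\<forall>k\<in>{1..r}. (\<Sum>i\<in>T. c i * V i k) = 0)"

lemma lin_indep_cols_cong:
  assumes "\<And>i k. i \<in> S \<Longrightarrow> k \<in> {1..r} \<Longrightarrow> V i k = W i k"
  shows "lin_indep_cols r V S = lin_indep_cols r W S"
proof -
  have "\<And>c k. k \<in> {1..r} \<Longrightarrow> (\<Sum>i\<in>S. c i * V i k) = (\<Sum>i\<in>S. c i * W i k)"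
    using assms by (intro sum.cong) auto
  then show ?thesis unfolding lin_indep_cols_def by auto
qed

lemma lin_indep_cols_subset:
  assumes "lin_indep_cols r V S" "T \<subseteq> S" "finite S"
  shows "lin_indep_cols r V T"
  unfolding lin_indep_cols_def
proof (intro allI impI ballI)
  fix c i assume rel: "\<forall>k\<in>{1..r}. (\<Sum>i\<in>T. c i * V i k) = 0" and i: "i \<in> T"
  define c' where "c' = (\<lambda>i. if i \<in> T then c i else 0)"
  have "(\<Sum>i\<in>S. c' i * V i k) = (\<Sum>i\<in>T. c i * V i k)" for k
    using assms(2,3) by (intro sum.mono_neutral_cong_right) (auto simp: c'_def)
  then have "c' i = 0" using assms(1,2) rel i unfolding lin_indep_cols_def by auto
  then show "c i = 0" using i by (simp add: c'_def)
qed

lemma lin_indep_cols_sum_eq_0: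
  "lin_indep_cols r V S \<Longrightarrow> lin_relation r V S c \<Longrightarrow> i \<in> S \<Longrightarrow> c i = 0"
  unfolding lin_indep_cols_def lin_relation_def by blast

definition col_mat :: "nat \<Rightarrow> config \<Rightarrow> nat set \<Rightarrow> real mat" where
  "col_mat r V S = mat r r (\<lambda>(k, j). V (sorted_list_of_set S ! j) (k + 1))"

definition col_vec :: "nat \<Rightarrow> nat set \<Rightarrow> (nat \<Rightarrow> real) \<Rightarrow> real vec" where
  "col_vec r S c = vec r (\<lambda>j. c (sorted_list_of_set S ! j))"

lemma det_cols_eq_det_col_mat: "det_cols r V S = det (col_mat r V S)"
  by (simp add: det_cols_def col_mat_def)

lemma col_mat_carrier: "col_mat r V S \<in> carrier_mat r r"
  by (simp add: col_mat_def)

lemma col_mat_mult_col_vec: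
  assumes "finite S" "card S = r" "k < r"
  shows "(col_mat r V S *\<^sub>v col_vec r S c) $ k = (\<Sum>i\<in>S. c i * V i (k + 1))"
proof -
  let ?l = "sorted_list_of_set S"
  have "(\<Sum>i\<in>S. c i * V i (k + 1)) = sum_list (map (\<lambda>i. c i * V i (k + 1)) ?l)"
    using assms(1) by (simp add: sum_list_distinct_conv_sum_set)
  also have "\<dots> = (\<Sum>j<r. c (?l ! j) * V (?l ! j) (k + 1))"
    using assms by (simp add: sum_list_sum_nth atLeast0LessThan)
  finally show ?thesis
    using assms by (simp add: col_mat_def col_vec_def scalar_prod_def atLeast0LessThan mult.commute)
qed

lemma col_vec_eq_zero_iff:
  assumes "finite S" "card S = r"
  shows "col_vec r S c = 0\<^sub>v r \<longleftrightarrow> (\<forall>i\<in>S. c i = 0)"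
proof -
  have "bij_betw ((!) (sorted_list_of_set S)) {..<r} S"
    using assms by (metis bij_betw_nth distinct_sorted_list_of_set length_sorted_list_of_set
        lessThan_atLeast0 set_sorted_list_of_set)
  then have "\<exists>j<r. i = sorted_list_of_set S ! j" if "i \<in> S" for i
    using that by (auto simp: bij_betw_def)
  moreover have "sorted_list_of_set S ! j \<in> S" if "j < r" for j
    using assms that by (metis nth_mem length_sorted_list_of_set set_sorted_list_of_set)
  ultimately show ?thesis by (auto simp: col_vec_def vec_eq_iff)
qed

lemma col_vec_surj:
  assumes "finite S" "card S = r" "v \<in> carrier_vec r"
  obtains c where "v = col_vec r S c"
proof -
  let ?l = "sorted_list_of_set S"
  have b: "bij_betw ((!) ?l) {..<r} S"
    using assms by (metis bij_betw_nth distinct_sorted_list_of_set length_sorted_list_of_set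
        lessThan_atLeast0 set_sorted_list_of_set)
  define c where "c = (\<lambda>i. v $ the_inv_into {..<r} ((!) ?l) i)"
  have "the_inv_into {..<r} ((!) ?l) (?l ! j) = j" if "j < r" for j
    using b that by (simp add: bij_betw_def the_inv_into_f_f)
  then have "v = col_vec r S c"
    using assms(3) by (auto simp: col_vec_def c_def)
  then show ?thesis by (rule that)
qed

lemma ball_atLeastAtMost_1_iff: "(\<forall>k\<in>{1..r}. P k) \<longleftrightarrow> (\<forall>k<r. P (Suc k))"
  unfolding image_Suc_lessThan[symmetric] by auto

lemma col_mat_mult_col_vec_eq_zero_iff:
  assumes "finite S" "card S = r"
  shows "col_mat r V S *\<^sub>v col_vec r S c = 0\<^sub>v r \<longleftrightarrow> lin_relation r V S c"
proof -
  have "col_mat r V S *\<^sub>v col_vec r S c = 0\<^sub>v r \<longleftrightarrow>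
      (\<forall>k<r. (col_mat r V S *\<^sub>v col_vec r S c) $ k = 0)"
    by (auto simp: vec_eq_iff col_mat_def)
  then show ?thesis
    unfolding lin_relation_def ball_atLeastAtMost_1_iff using col_mat_mult_col_vec[OF assms] by simp
qed

lemma lin_indep_cols_iff_col_mat:
  assumes "finite S" "card S = r"
  shows "lin_indep_cols r V S \<longleftrightarrow>
    (\<forall>v\<in>carrier_vec r. col_mat r V S *\<^sub>v v = 0\<^sub>v r \<longrightarrow> v = 0\<^sub>v r)"
proof
  assume indep: "lin_indep_cols r V S"
  show "\<forall>v\<in>carrier_vec r. col_mat r V S *\<^sub>v v = 0\<^sub>v r \<longrightarrow> v = 0\<^sub>v r"
  proof (intro ballI impI)
    fix v assume "v \<in> carrier_vec r" "col_mat r V S *\<^sub>v v = 0\<^sub>v r"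
    moreover obtain c where "v = col_vec r S c" using col_vec_surj[OF assms \<open>v \<in> carrier_vec r\<close>] .
    ultimately show "v = 0\<^sub>v r"
      using indep col_mat_mult_col_vec_eq_zero_iff[OF assms] col_vec_eq_zero_iff[OF assms]
      by (metis lin_indep_cols_sum_eq_0)
  qed
next
  assume "\<forall>v\<in>carrier_vec r. col_mat r V S *\<^sub>v v = 0\<^sub>v r \<longrightarrow> v = 0\<^sub>v r"
  then have "col_vec r S c = 0\<^sub>v r" if "lin_relation r V S c" for c
    using that col_mat_mult_col_vec_eq_zero_iff[OF assms] by (simp add: col_vec_def)
  then show "lin_indep_cols r V S"
    using col_vec_eq_zero_iff[OF assms] by (simp add: lin_indep_cols_def lin_relation_def)
qed

lemma lin_indep_cols_iff_det_cols:
  assumes "finite S" "card S = r"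
  shows "lin_indep_cols r V S \<longleftrightarrow> det_cols r V S \<noteq> 0"
  using lin_indep_cols_iff_col_mat[OF assms] det_0_iff_vec_prod_zero[OF col_mat_carrier]
  by (auto simp: det_cols_eq_det_col_mat)

lemma lin_indep_cols_spanning:
  assumes "finite S" "card S = r" "lin_indep_cols r V S"
  obtains c where "\<forall>k\<in>{1..r}. (\<Sum>i\<in>S. c i * V i k) = y k"
proof -
  let ?A = "col_mat r V S"
  have "det ?A \<noteq> 0"
    using assms lin_indep_cols_iff_det_cols by (simp add: det_cols_eq_det_col_mat)
  from det_non_zero_imp_unit[OF col_mat_carrier this, of "()"]
  obtain B where B: "B \<in> carrier_mat r r" "?A * B = 1\<^sub>m r"
    unfolding Units_def ring_mat_def by auto
  define yv where "yv = vec r (\<lambda>k. y (k + 1))"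
  have "B *\<^sub>v yv \<in> carrier_vec r" using B by (simp add: yv_def)
  then obtain c where c: "B *\<^sub>v yv = col_vec r S c" using col_vec_surj[OF assms(1,2)] by metis
  have "?A *\<^sub>v col_vec r S c = yv"
    unfolding c[symmetric] using B
    by (metis assoc_mult_mat_vec col_mat_carrier one_mult_mat_vec vec_carrier yv_def)
  then have "(\<Sum>i\<in>S. c i * V i (k + 1)) = y (k + 1)" if "k < r" for k
    using col_mat_mult_col_vec[OF assms(1,2) that, of V c] that by (simp add: yv_def)
  then have "\<forall>k\<in>{1..r}. (\<Sum>i\<in>S. c i * V i k) = y k"
    unfolding ball_atLeastAtMost_1_iff by simp
  then show ?thesis by (rule that)
qed

lemma sorted_list_of_set_insert_greatest:
  assumes "finite S" "\<forall>i\<in>S. i < n"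
  shows "sorted_list_of_set (insert n S) = sorted_list_of_set S @ [n]"
proof -
  have "n \<notin> S" using assms(2) by blast
  then show ?thesis
    using assms by (simp add: sorted_list_of_set_insert sorted_insort_is_snoc less_imp_le)
qed

lemma det_cols_insert_greatest:
  assumes S: "finite S" "card S + 1 = r" "\<forall>i\<in>S. i < n"
    and same: "\<forall>i\<in>S. \<forall>k\<in>{1..r}. W i k = V i k"
  shows "det_cols r W (insert n S) =
    ip r (W n) (\<lambda>k. cofactor (col_mat r V (insert n S)) (k - 1) (r - 1))"
proof -
  let ?R = "insert n S" and ?l = "sorted_list_of_set S"
  have sl: "sorted_list_of_set ?R = ?l @ [n]"
    using S(1,3) by (rule sorted_list_of_set_insert_greatest)
  have len: "length ?l = r - 1" using S by simp
  have entry: "col_mat r U ?R $$ (k, j) = (if j < r - 1 then U (?l ! j) (k + 1) else U n (k + 1))"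
    if "k < r" "j < r" for U k j
    using that len by (simp add: col_mat_def sl nth_append)
  have mem: "?l ! j \<in> S" if "j < r - 1" for j
    using that len S(1) by (metis nth_mem set_sorted_list_of_set)
  have del: "mat_delete (col_mat r W ?R) k (r - 1) = mat_delete (col_mat r V ?R) k (r - 1)" for k
  proof (rule eq_matI)
    fix i j assume "i < dim_row (mat_delete (col_mat r V ?R) k (r - 1))"
      "j < dim_col (mat_delete (col_mat r V ?R) k (r - 1))"
    then have ij: "i < r - 1" "j < r - 1" by (auto simp: col_mat_def)
    define i' where "i' = (if i < k then i else Suc i)"
    have i': "i' < r" using ij by (auto simp: i'_def)
    have "mat_delete (col_mat r U ?R) k (r - 1) $$ (i, j) = U (?l ! j) (i' + 1)" for U
      using ij i' entry[OF i', of j U] by (simp add: mat_delete_def col_mat_def i'_def)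
    then show "mat_delete (col_mat r W ?R) k (r - 1) $$ (i, j) =
        mat_delete (col_mat r V ?R) k (r - 1) $$ (i, j)"
      using mem[OF ij(2)] same i' by simp
  qed (auto simp: col_mat_def)
  have "det_cols r W ?R = (\<Sum>k<r. col_mat r W ?R $$ (k, r - 1) * cofactor (col_mat r W ?R) k (r - 1))"
    unfolding det_cols_eq_det_col_mat using S(2)
    by (intro laplace_expansion_column[OF col_mat_carrier]) simp
  also have "\<dots> = (\<Sum>k<r. W n (Suc k) * cofactor (col_mat r V ?R) (Suc k - 1) (r - 1))"
    using entry S(2) del by (intro sum.cong) (auto simp: cofactor_def)
  also have "\<dots> = ip r (W n) (\<lambda>k. cofactor (col_mat r V ?R) (k - 1) (r - 1))"
    unfolding ip_def by (rule sum_bounds_lt_plus1)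
  finally show ?thesis .
qed

section \<open>Gordan's theorem and signed circuits\<close>

definition std_simplex :: "nat set \<Rightarrow> (nat \<Rightarrow> real) set" where
  "std_simplex I =
     Pi UNIV (\<lambda>i. if i \<in> I then {0..1} else {0}) \<inter> {lam. (\<Sum>i\<in>I. lam i) = 1}"

lemma compact_std_simplex: "compact (std_simplex I)"
proof -
  have "compactin (product_topology (\<lambda>_. euclidean) UNIV)
      (PiE UNIV (\<lambda>i. if i \<in> I then {0..1::real} else {0}))"
    by (subst compactin_PiE) (auto simp: compactin_euclidean_iff)
  then have "compact (Pi UNIV (\<lambda>i. if i \<in> I then {0..1::real} else {0}))"
    by (simp add: euclidean_product_topology compactin_euclidean_iff PiE_UNIV_domain)
  moreover have "closed {lam::nat \<Rightarrow> real. (\<Sum>i\<in>I. lam i) = 1}"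
    by (intro closed_Collect_eq continuous_intros) auto
  ultimately show ?thesis
    unfolding std_simplex_def by (rule compact_Int_closed)
qed

lemma std_simplex_move_to_vertex:
  assumes lam: "lam \<in> std_simplex I" and I: "finite I" "j \<in> I" and t: "0 \<le> t" "t \<le> 1"
  shows "(\<lambda>i. (1 - t) * lam i + t * (if i = j then 1 else 0)) \<in> std_simplex I"
proof -
  have bounds: "lam i \<in> (if i \<in> I then {0..1} else {0})" for i
    using lam by (simp add: std_simplex_def Pi_iff)
  have "(1 - t) * lam i + t * (if i = j then 1 else 0) \<in> (if i \<in> I then {0..1} else {0})" for i
  proof (cases "i \<in> I")
    case True
    then have "0 \<le> lam i" "lam i \<le> 1" using bounds[of i] by auto
    then have "0 \<le> (1 - t) * lam i" "(1 - t) * lam i \<le> 1 - t"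
      using t by (simp_all add: mult_left_le)
    then show ?thesis using True t by auto
  next
    case False
    then show ?thesis using bounds[of i] I(2) by auto
  qed
  moreover have "(\<Sum>i\<in>I. (1 - t) * lam i + t * (if i = j then 1 else 0)) = 1"
    using lam I by (simp add: std_simplex_def sum.distrib sum_distrib_left[symmetric])
  ultimately show ?thesis by (simp add: std_simplex_def Pi_iff)
qed

lemma nonneg_of_affine_nonneg_near_0:
  fixes a b :: real
  assumes "\<And>t. 0 < t \<Longrightarrow> t \<le> 1 \<Longrightarrow> 0 \<le> a + t * b"
  shows "0 \<le> a"
proof (cases "b \<le> 0")
  case True
  then show ?thesis using assms[of 1] by simp
next
  case False
  show ?thesis
  proof (rule ccontr)
    assume "\<not> 0 \<le> a"
    define t where "t = min 1 (- a / (2 * b))"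
    have "- a / (2 * b) > 0" using \<open>\<not> 0 \<le> a\<close> False by (intro divide_pos_pos) auto
    then have t: "0 < t" "t \<le> 1" by (auto simp: t_def)
    have "t * b \<le> (- a / (2 * b)) * b"
      using False by (intro mult_right_mono) (auto simp: t_def)
    also have "\<dots> = - a / 2" using False by simp
    finally show False using assms[OF t] \<open>\<not> 0 \<le> a\<close> by simp
  qed
qed

lemma min_norm_comb_inner_ge:
  fixes w :: config and r :: nat and I :: "nat set"
  defines "g \<equiv> \<lambda>lam. \<Sum>k\<in>{1..r}. (\<Sum>i\<in>I. lam i * w i k)\<^sup>2"
  assumes I: "finite I" "j \<in> I" and lam: "lam \<in> std_simplex I"
    and min: "\<And>mu. mu \<in> std_simplex I \<Longrightarrow> g lam \<le> g mu"
  defines "p \<equiv> \<lambda>k. \<Sum>i\<in>I. lam i * w i k"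
  shows "ip r (w j) p \<ge> g lam"
proof -
  have g_lam: "g lam = (\<Sum>k\<in>{1..r}. (p k)\<^sup>2)" by (simp add: g_def p_def)
  define A where "A = (\<Sum>k\<in>{1..r}. p k * (w j k - p k))"
  define B where "B = (\<Sum>k\<in>{1..r}. (w j k - p k)\<^sup>2)"
  have "0 \<le> 2 * A + t * B" if t: "0 < t" "t \<le> 1" for t
  proof -
    define mu where "mu = (\<lambda>i. (1 - t) * lam i + t * (if i = j then 1 else 0))"
    have "(\<Sum>i\<in>I. mu i * w i k) = p k + t * (w j k - p k)" for k
    proof -
      have "(\<Sum>i\<in>I. mu i * w i k) =
          (\<Sum>i\<in>I. (1 - t) * (lam i * w i k) + (if i = j then t * w j k else 0))"
        by (intro sum.cong) (auto simp: mu_def algebra_simps)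
      also have "\<dots> = (1 - t) * p k + t * w j k"
        using I by (simp add: sum.distrib sum_distrib_left p_def)
      finally show ?thesis by (simp add: algebra_simps)
    qed
    then have "g mu = (\<Sum>k\<in>{1..r}. (p k + t * (w j k - p k))\<^sup>2)"
      by (simp add: g_def)
    also have "\<dots> = (\<Sum>k\<in>{1..r}. (p k)\<^sup>2 + t * (2 * (p k * (w j k - p k)) + t * (w j k - p k)\<^sup>2))"
      by (intro sum.cong) (simp_all add: power2_eq_square algebra_simps)
    also have "\<dots> = g lam + t * (2 * A + t * B)"
      unfolding g_lam A_def B_def by (simp add: sum.distrib sum_distrib_left distrib_left)
    finally have "g mu = g lam + t * (2 * A + t * B)" .
    moreover have "mu \<in> std_simplex I"
      unfolding mu_def using std_simplex_move_to_vertex[OF lam I(1,2)] t by simp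
    ultimately have "0 \<le> t * (2 * A + t * B)" using min by fastforce
    then show ?thesis using t by (simp add: zero_le_mult_iff)
  qed
  then have "0 \<le> A" using nonneg_of_affine_nonneg_near_0[of "2 * A" B] by simp
  moreover have "ip r (w j) p = A + g lam"
    unfolding g_lam A_def ip_def by (simp add: power2_eq_square sum.distrib[symmetric] algebra_simps)
  ultimately show ?thesis by simp
qed

theorem gordan_alternative:
  fixes w :: config
  assumes I: "finite I" "I \<noteq> {}" and no_pos: "\<not> (\<exists>u. \<forall>i\<in>I. ip r (w i) u > 0)"
  obtains lam where "\<forall>i\<in>I. lam i \<ge> 0" "lin_relation r w I lam" "\<exists>i\<in>I. lam i > 0"
proof -
  define g where "g = (\<lambda>lam. \<Sum>k\<in>{1..r}. (\<Sum>i\<in>I. lam i * w i k)\<^sup>2)"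
  obtain i0 where "i0 \<in> I" using I by blast
  then have "(\<lambda>i. if i = i0 then 1 else 0) \<in> std_simplex I"
    using I by (auto simp: std_simplex_def Pi_iff)
  then have ne: "std_simplex I \<noteq> {}" by blast
  have "continuous_on (std_simplex I) (\<lambda>x::nat \<Rightarrow> real. x i)" for i
    by (rule continuous_on_subset[of UNIV]) simp_all
  then have "continuous_on (std_simplex I) g"
    unfolding g_def by (intro continuous_intros)
  then obtain lam where lam: "lam \<in> std_simplex I"
    and min: "\<And>mu. mu \<in> std_simplex I \<Longrightarrow> g lam \<le> g mu"
    using continuous_attains_inf[OF compact_std_simplex ne] by blast
  define p where "p = (\<lambda>k. \<Sum>i\<in>I. lam i * w i k)"
  have "g lam = 0"
  proof (rule ccontr)
    assume "g lam \<noteq> 0"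
    then have "g lam > 0" by (simp add: g_def order_less_le sum_nonneg)
    moreover have "ip r (w j) p \<ge> g lam" if "j \<in> I" for j
      using min_norm_comb_inner_ge[OF I(1) that lam min[unfolded g_def]]
      unfolding g_def p_def .
    ultimately have "\<forall>j\<in>I. ip r (w j) p > 0" by fastforce
    then show False using no_pos by blast
  qed
  then have "lin_relation r w I lam"
    by (simp add: g_def lin_relation_def sum_nonneg_eq_0_iff)
  moreover have nonneg: "\<forall>i\<in>I. lam i \<ge> 0"
  proof
    fix i assume "i \<in> I"
    then show "lam i \<ge> 0" using lam by (simp add: std_simplex_def Pi_iff) (metis atLeastAtMost_iff)
  qed
  moreover have "\<exists>i\<in>I. lam i > 0"
  proof (rule ccontr)
    assume "\<not> (\<exists>i\<in>I. lam i > 0)"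
    then have "\<forall>i\<in>I. lam i = 0" using nonneg by force
    then show False using lam by (simp add: std_simplex_def)
  qed
  ultimately show ?thesis using that by blast
qed

lemma lin_relation_cong_support:
  assumes "finite T" "T' \<subseteq> T" "\<forall>i\<in>T - T'. c i = 0"
  shows "lin_relation r V T c \<longleftrightarrow> lin_relation r V T' c"
proof -
  have "(\<Sum>i\<in>T. c i * V i k) = (\<Sum>i\<in>T'. c i * V i k)" for k
    using assms by (intro sum.mono_neutral_right) auto
  then show ?thesis by (simp add: lin_relation_def)
qed

lemma lin_relation_diff_scaled:
  "lin_relation r V T a \<Longrightarrow> lin_relation r V T b \<Longrightarrow> lin_relation r V T (\<lambda>i. a i - c * b i)"
  by (simp add: lin_relation_def algebra_simps sum_subtractf sum_distrib_left[symmetric])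

lemma lin_relation_scaled:
  "lin_relation r V T a \<Longrightarrow> lin_relation r V T (\<lambda>i. c * a i)"
  by (simp add: lin_relation_def mult.assoc sum_distrib_left[symmetric])

lemma ip_lin_comb:
  "ip r (\<lambda>k. \<Sum>i\<in>T. c i * V i k) u = (\<Sum>i\<in>T. c i * ip r (V i) u)"
  unfolding ip_def by (simp add: sum_distrib_left sum_distrib_right mult.assoc sum.swap[of _ T])

lemma signed_relation_not_covector:
  assumes X: "X \<in> signvecs r n V" and T: "T \<subseteq> {1..n}" "T \<noteq> {}"
    and rel: "lin_relation r V T mu" and sgn: "\<forall>i\<in>T. sgn (mu i) = X i" and nz: "\<forall>i\<in>T. X i \<noteq> 0"
  shows False
proof -
  obtain u where u: "X = (\<lambda>i. if i \<in> {1..n} then sgn (ip r (V i) u) else 0)"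
    using X unfolding signvecs_def by blast
  have "mu i * ip r (V i) u > 0" if "i \<in> T" for i
  proof -
    have "sgn (mu i) = sgn (ip r (V i) u)" "sgn (mu i) \<noteq> 0"
      using sgn nz T u that by auto
    then have "sgn (mu i * ip r (V i) u) = 1" by (simp add: sgn_mult) (metis sgn_if)
    then show ?thesis by (simp add: sgn_1_pos)
  qed
  then have "(\<Sum>i\<in>T. mu i * ip r (V i) u) > 0"
    using T finite_subset by (intro sum_pos) auto
  moreover have "(\<Sum>i\<in>T. mu i * ip r (V i) u) = ip r (\<lambda>k. \<Sum>i\<in>T. mu i * V i k) u"
    by (rule ip_lin_comb[symmetric])
  moreover have "\<dots> = 0"
    using rel by (simp add: lin_relation_def ip_def)
  ultimately show False by simp
qed

lemma signvecs_uminus: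
  assumes "X \<in> signvecs r n V" shows "(\<lambda>i. - X i) \<in> signvecs r n V"
proof -
  obtain u where u: "nonzero_vec r u" "X = (\<lambda>i. if i \<in> {1..n} then sgn (ip r (V i) u) else 0)"
    using assms unfolding signvecs_def by blast
  have "ip r (V i) (\<lambda>k. - u k) = - ip r (V i) u" for i by (simp add: ip_def sum_negf)
  moreover have "nonzero_vec r (\<lambda>k. - u k)" using u(1) by (auto simp: nonzero_vec_def)
  ultimately show ?thesis using u(2) unfolding signvecs_def
    by (intro CollectI exI[of _ "\<lambda>k. - u k"]) (auto simp: sgn_minus)
qed

lemma pm_vecs_uminus: "Y \<in> pm_vecs n \<Longrightarrow> (\<lambda>i. - Y i) \<in> pm_vecs n"
  unfolding pm_vecs_def by auto

lemma general_position_scale_cols: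
  assumes "general_position r n V" "\<forall>i\<in>{1..n}. X i \<noteq> 0"
  shows "general_position r n (\<lambda>i k. X i * V i k)"
  unfolding general_position_def lin_indep_cols_def
proof (intro allI impI ballI)
  fix U c i assume U: "U \<subseteq> {1..n} \<and> card U = r"
    and rel: "\<forall>k\<in>{1..r}. (\<Sum>i\<in>U. c i * (X i * V i k)) = 0" and i: "i \<in> U"
  have "lin_relation r V U (\<lambda>i. c i * X i)"
    using rel by (simp add: lin_relation_def mult.assoc)
  then have "c i * X i = 0"
    using assms(1) U i lin_indep_cols_sum_eq_0 unfolding general_position_def by blast
  then show "c i = 0" using assms(2) U i by auto
qed

lemma lin_relation_unique:
  assumes gp: "general_position r n V" and T: "T \<subseteq> {1..n}" "card T = r + 1"
    and rel: "lin_relation r V T mu" "lin_relation r V T ka" and nz: "\<forall>i\<in>T. mu i \<noteq> 0"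
  obtains c where "\<forall>i\<in>T. ka i = c * mu i"
proof -
  have fT: "finite T" using T finite_subset by blast
  obtain i0 where i0: "i0 \<in> T" using T by fastforce
  define rho where "rho = (\<lambda>i. ka i0 / mu i0 * mu i - ka i)"
  have "lin_relation r V T (\<lambda>i. ka i0 / mu i0 * mu i)"
    by (rule lin_relation_scaled[OF rel(1)])
  from lin_relation_diff_scaled[OF this rel(2), of 1]
  have "lin_relation r V T rho" by (simp add: rho_def)
  then have "lin_relation r V (T - {i0}) rho"
    using lin_relation_cong_support[OF fT, of "T - {i0}" rho] nz i0 by (simp add: rho_def)
  moreover have "T - {i0} \<subseteq> {1..n}" "card (T - {i0}) = r"
    using T i0 fT by (auto simp: card_Diff_singleton)
  then have "lin_indep_cols r V (T - {i0})"
    using gp unfolding general_position_def by blast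
  ultimately have "\<forall>i\<in>T - {i0}. rho i = 0" using lin_indep_cols_sum_eq_0 by blast
  then have "ka i = ka i0 / mu i0 * mu i" if "i \<in> T" for i
    using that nz i0 by (cases "i = i0") (auto simp: rho_def)
  then show ?thesis using that by blast
qed

lemma nonneg_relation_support_card_gt:
  assumes gp: "general_position r n w" and rn: "r \<le> n"
    and nonneg: "\<forall>i\<in>{1..n}. lam i \<ge> 0" and rel: "lin_relation r w {1..n} lam"
    and ne: "{i\<in>{1..n}. lam i > 0} \<noteq> {}"
  shows "r < card {i\<in>{1..n}. lam i > 0}"
proof (rule ccontr)
  define T where "T = {i\<in>{1..n}. lam i > 0}"
  assume "\<not> r < card {i\<in>{1..n}. lam i > 0}"
  then have "card T \<le> r" by (simp add: T_def)
  moreover have "T \<subseteq> {1..n}" by (auto simp: T_def)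
  ultimately obtain U where U: "T \<subseteq> U" "U \<subseteq> {1..n}" "card U = r"
    using exists_subset_between[of T r "{1..n}"] rn by auto
  have "\<forall>i\<in>{1..n} - U. lam i = 0" using nonneg U(1) by (force simp: T_def)
  then have "lin_relation r w U lam"
    using lin_relation_cong_support[of "{1..n}" U lam] rel U(2) by simp
  moreover have "lin_indep_cols r w U" using gp U unfolding general_position_def by blast
  ultimately have "\<forall>i\<in>U. lam i = 0" using lin_indep_cols_sum_eq_0 by blast
  then show False using ne U(1) by (force simp: T_def)
qed

text \<open>The Caratheodory step: subtracting a suitable multiple of a relation on r + 1 of the
  columns kills one coefficient of a nonnegative relation and keeps it nonnegative.\<close>
lemma nonneg_relation_shrink:
  assumes gp: "general_position r n w"
    and nonneg: "\<forall>i\<in>{1..n}. lam i \<ge> 0" and rel: "lin_relation r w {1..n} lam"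
    and big: "r + 2 \<le> card {i\<in>{1..n}. lam i > 0}"
  obtains lam' where "\<forall>i\<in>{1..n}. lam' i \<ge> 0" "lin_relation r w {1..n} lam'"
    "{i\<in>{1..n}. lam' i > 0} \<noteq> {}"
    "card {i\<in>{1..n}. lam' i > 0} < card {i\<in>{1..n}. lam i > 0}"
proof -
  define T where "T = {i\<in>{1..n}. lam i > 0}"
  have fT: "finite T" and TN: "T \<subseteq> {1..n}" by (auto simp: T_def)
  obtain T' where T': "T' \<subseteq> T" "card T' = r + 1"
    using obtain_subset_with_card_n[of "r + 1" T] big by (auto simp: T_def)
  then have fT': "finite T'" using fT finite_subset by blast
  obtain t where t: "t \<in> T'" using T'(2) by fastforce
  define U where "U = T' - {t}"
  have U: "finite U" "card U = r" "U \<subseteq> {1..n}" "t \<notin> U" "T' = insert t U"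
    using fT' T' t TN by (auto simp: U_def card_Diff_singleton)
  then have "lin_indep_cols r w U" using gp unfolding general_position_def by blast
  then obtain be where be: "\<forall>k\<in>{1..r}. (\<Sum>i\<in>U. be i * w i k) = w t k"
    using lin_indep_cols_spanning[OF U(1,2)] by metis
  define kv where "kv = (\<lambda>i. if i = t then -1 else if i \<in> U then be i else 0)"
  have "(\<Sum>i\<in>T'. kv i * w i k) = - w t k + (\<Sum>i\<in>U. be i * w i k)" for k
    using U by (simp add: kv_def) (intro sum.cong, auto)
  then have "lin_relation r w T' kv" using be by (simp add: lin_relation_def)
  then have kv_rel: "lin_relation r w {1..n} kv"
    using lin_relation_cong_support[of "{1..n}" T' kv] T' TN U by (auto simp: kv_def)
  define kb where "kb = (if \<exists>i\<in>T'. kv i > 0 then kv else (\<lambda>i. - kv i))"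
  have kb_rel: "lin_relation r w {1..n} kb"
    using lin_relation_scaled[OF kv_rel, of "-1"] kv_rel by (simp add: kb_def)
  have kb_out: "kb i = 0" if "i \<notin> T'" for i using that U by (simp add: kb_def kv_def)
  have "\<exists>i\<in>T'. kb i > 0" using t by (auto simp: kb_def kv_def)
  then have Pos: "finite {i\<in>T'. kb i > 0}" "{i\<in>T'. kb i > 0} \<noteq> {}" using fT' by auto
  define th where "th = Min ((\<lambda>i. lam i / kb i) ` {i\<in>T'. kb i > 0})"
  have "th \<in> (\<lambda>i. lam i / kb i) ` {i\<in>T'. kb i > 0}"
    unfolding th_def using Pos by (intro Min_in) auto
  then obtain ist where ist: "ist \<in> T'" "kb ist > 0" "th = lam ist / kb ist" by blast
  have th_le: "th * kb i \<le> lam i" if "i \<in> T'" "kb i > 0" for i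
    using that Pos by (simp add: th_def pos_le_divide_eq[symmetric])
  have "lam ist > 0" using ist(1) T'(1) by (auto simp: T_def)
  then have th0: "th \<ge> 0" using ist by simp
  define lam' where "lam' = (\<lambda>i. lam i - th * kb i)"
  have nonneg': "\<forall>i\<in>{1..n}. lam' i \<ge> 0"
  proof
    fix i assume i: "i \<in> {1..n}"
    show "lam' i \<ge> 0"
    proof (cases "i \<in> T' \<and> kb i > 0")
      case True then show ?thesis using th_le by (simp add: lam'_def)
    next
      case False
      then have "th * kb i \<le> 0" using th0 kb_out by (auto simp: mult_nonneg_nonpos)
      moreover have "lam i \<ge> 0" using nonneg i by blast
      ultimately show ?thesis by (simp add: lam'_def)
    qed
  qed
  have rel': "lin_relation r w {1..n} lam'"
    unfolding lam'_def by (rule lin_relation_diff_scaled[OF rel kb_rel])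
  have "{i\<in>{1..n}. lam' i > 0} \<subseteq> T - {ist}"
  proof
    fix i assume i: "i \<in> {i\<in>{1..n}. lam' i > 0}"
    have "i \<in> T"
    proof (rule ccontr)
      assume "i \<notin> T"
      then have "lam i = 0" "kb i = 0" using i nonneg kb_out T'(1) by (force simp: T_def)+
      then show False using i by (simp add: lam'_def)
    qed
    moreover have "lam' ist = 0" using ist by (simp add: lam'_def)
    ultimately show "i \<in> T - {ist}" using i by auto
  qed
  then have "card {i\<in>{1..n}. lam' i > 0} \<le> card (T - {ist})"
    using fT by (intro card_mono) auto
  also have "\<dots> < card T" using fT ist(1) T'(1) by (intro card_Diff1_less) auto
  finally have "card {i\<in>{1..n}. lam' i > 0} < card T" .
  moreover have "\<not> T \<subseteq> T'"
  proof
    assume "T \<subseteq> T'"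
    then have "card T \<le> card T'" using fT' card_mono by blast
    then show False using T'(2) big by (simp add: T_def)
  qed
  then obtain i1 where "i1 \<in> T" "i1 \<notin> T'" by blast
  then have "{i\<in>{1..n}. lam' i > 0} \<noteq> {}"
    using kb_out TN by (auto simp: lam'_def T_def)
  ultimately show ?thesis using that nonneg' rel' by (simp add: T_def)
qed

lemma nonneg_circuit_exists:
  assumes gp: "general_position r n w" and rn: "r \<le> n"
    and "\<forall>i\<in>{1..n}. lam i \<ge> 0" "lin_relation r w {1..n} lam" "{i\<in>{1..n}. lam i > 0} \<noteq> {}"
  obtains lam' where "\<forall>i\<in>{1..n}. lam' i \<ge> 0" "lin_relation r w {1..n} lam'"
    "card {i\<in>{1..n}. lam' i > 0} = r + 1"
proof -
  have "\<exists>lam'. (\<forall>i\<in>{1..n}. lam' i \<ge> 0) \<and> lin_relation r w {1..n} lam' \<and>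
      card {i\<in>{1..n}. lam' i > 0} = r + 1"
    using assms(3-5)
  proof (induction "card {i\<in>{1..n}. lam i > 0}" arbitrary: lam rule: less_induct)
    case less
    have "r < card {i\<in>{1..n}. lam i > 0}"
      using nonneg_relation_support_card_gt[OF gp rn less.prems] .
    then consider "card {i\<in>{1..n}. lam i > 0} = r + 1" | "r + 2 \<le> card {i\<in>{1..n}. lam i > 0}"
      by linarith
    then show ?case
    proof cases
      case 1 then show ?thesis using less.prems by blast
    next
      case 2
      obtain lam' where "\<forall>i\<in>{1..n}. lam' i \<ge> 0" "lin_relation r w {1..n} lam'"
        "{i\<in>{1..n}. lam' i > 0} \<noteq> {}"
        "card {i\<in>{1..n}. lam' i > 0} < card {i\<in>{1..n}. lam i > 0}"
        using nonneg_relation_shrink[OF gp less.prems(1,2) 2] .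
      then show ?thesis using less.hyps by blast
    qed
  qed
  then show ?thesis using that by blast
qed

lemma signvecs_if_signs_positive:
  assumes X: "X \<in> pm_vecs n" and N: "{1..n} \<noteq> {}"
    and pos: "\<forall>i\<in>{1..n}. X i * ip r (V i) u > 0"
  shows "X \<in> signvecs r n V"
proof -
  have "sgn (ip r (V i) u) = X i" if "i \<in> {1..n}" for i
  proof -
    have "X i * ip r (V i) u > 0" using pos that by blast
    moreover have "X i = 1 \<or> X i = -1" using X that by (simp add: pm_vecs_def)
    ultimately show ?thesis by (auto simp: sgn_if)
  qed
  moreover have "X i = 0" if "i \<notin> {1..n}" for i using X that by (simp add: pm_vecs_def)
  ultimately have "X = (\<lambda>i. if i \<in> {1..n} then sgn (ip r (V i) u) else 0)" by auto
  moreover have "nonzero_vec r u"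
  proof (rule ccontr)
    assume "\<not> nonzero_vec r u"
    then have "ip r (V i) u = 0" for i by (simp add: nonzero_vec_def ip_def)
    then show False using pos N by fastforce
  qed
  ultimately show ?thesis unfolding signvecs_def by blast
qed

text \<open>Gordan's theorem turns a sign vector X that is not a covector into a nonnegative
  relation among the columns X i v i; by general position its minimal support is a circuit.\<close>
theorem signed_circuit_if_not_signvec:
  assumes gp: "general_position r n V" and rn: "1 \<le> r" "r \<le> n"
    and X: "X \<in> pm_vecs n" "X \<notin> signvecs r n V"
  obtains T mu where "T \<subseteq> {1..n}" "card T = r + 1" "lin_relation r V T mu"
    "\<forall>i\<in>T. sgn (mu i) = X i"
proof -
  let ?N = "{1..n}"
  have Xpm: "X i = 1 \<or> X i = -1" if "i \<in> ?N" for i using X(1) that by (simp add: pm_vecs_def)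
  define w where "w = (\<lambda>i k. X i * V i k)"
  have N: "?N \<noteq> {}" using rn by simp
  have "\<not> (\<exists>u. \<forall>i\<in>?N. ip r (w i) u > 0)"
  proof
    assume "\<exists>u. \<forall>i\<in>?N. ip r (w i) u > 0"
    moreover have "ip r (w i) u = X i * ip r (V i) u" for i u
      by (simp add: w_def ip_def sum_distrib_left mult.assoc)
    ultimately obtain u where "\<forall>i\<in>?N. X i * ip r (V i) u > 0" by auto
    then show False using signvecs_if_signs_positive[OF X(1) N] X(2) by blast
  qed
  then obtain lam0 where "\<forall>i\<in>?N. lam0 i \<ge> 0" "lin_relation r w ?N lam0" "\<exists>i\<in>?N. lam0 i > 0"
    using gordan_alternative[OF finite_atLeastAtMost N] by blast
  moreover have "\<forall>i\<in>?N. X i \<noteq> 0" using Xpm by fastforce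
  then have gpw: "general_position r n w"
    unfolding w_def by (rule general_position_scale_cols[OF gp])
  ultimately obtain lam where lam: "\<forall>i\<in>?N. lam i \<ge> 0" "lin_relation r w ?N lam"
    and card: "card {i\<in>?N. lam i > 0} = r + 1"
    using nonneg_circuit_exists[OF gpw rn(2)] by blast
  define T where "T = {i\<in>?N. lam i > 0}"
  define mu where "mu = (\<lambda>i. lam i * X i)"
  have TN: "T \<subseteq> ?N" by (auto simp: T_def)
  have "\<forall>i\<in>?N - T. lam i = 0" using lam(1) by (auto simp: T_def)
  then have "lin_relation r w T lam"
    using lin_relation_cong_support[OF finite_atLeastAtMost TN] lam(2) by blast
  then have "lin_relation r V T mu"
    by (simp add: lin_relation_def mu_def w_def mult.assoc)
  moreover have "sgn (mu i) = X i" if "i \<in> T" for i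
  proof -
    have "lam i > 0" "X i = 1 \<or> X i = -1" using that Xpm TN by (auto simp: T_def)
    then show ?thesis by (auto simp: mu_def sgn_mult)
  qed
  ultimately show ?thesis using that TN card by (simp add: T_def)
qed

section \<open>Moment configurations and their chambers\<close>

definition moment :: config where
  "moment i k = real i ^ (k - 1)"

definition moment_config :: "nat \<Rightarrow> (nat \<Rightarrow> real) \<Rightarrow> config" where
  "moment_config n x = (\<lambda>i. if i = n then x else moment i)"

definition root_poly :: "nat set \<Rightarrow> real poly" where
  "root_poly S = (\<Prod>i\<in>S. [:- real i, 1:])"

definition coeff_vec :: "real poly \<Rightarrow> nat \<Rightarrow> real" where
  "coeff_vec p k = coeff p (k - 1)"

text \<open>For card S < r, the inner product with the coefficients of \<Prod>i\<in>S. (t - i) evaluates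
  this polynomial at i on the moment vector of i, so it vanishes on the moment vectors
  indexed by S. For card S = r - 1 its zero set is the hyperplane they span.\<close>
definition wall_form :: "nat \<Rightarrow> nat set \<Rightarrow> (nat \<Rightarrow> real) \<Rightarrow> real" where
  "wall_form r S x = ip r x (coeff_vec (root_poly S))"

definition walls :: "nat \<Rightarrow> nat \<Rightarrow> nat set set" where
  "walls r n = {S. S \<subseteq> {1..n - 1} \<and> card S + 1 = r}"

definition generic :: "nat \<Rightarrow> nat \<Rightarrow> (nat \<Rightarrow> real) \<Rightarrow> bool" where
  "generic r n x \<longleftrightarrow> (\<forall>S\<in>walls r n. wall_form r S x \<noteq> 0)"

lemma finite_walls: "finite (walls r n)"
  unfolding walls_def by (rule finite_subset[of _ "Pow {1..n - 1}"]) auto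

lemma walls_memD:
  assumes "S \<in> walls r n"
  shows "finite S" "card S + 1 = r" "S \<subseteq> {1..n}" "n \<notin> S" "\<forall>i\<in>S. i < n"
proof -
  have S: "S \<subseteq> {1..n - 1}" "card S + 1 = r" using assms by (auto simp: walls_def)
  have "1 \<le> i \<and> i < n" if "i \<in> S" for i
  proof -
    have "i \<in> {1..n - 1}" using S(1) that by blast
    then show ?thesis by auto
  qed
  then show "finite S" "card S + 1 = r" "S \<subseteq> {1..n}" "n \<notin> S" "\<forall>i\<in>S. i < n"
    using S finite_subset[OF S(1)] by fastforce+
qed

lemma ip_cong: "(\<And>k. k \<in> {1..r} \<Longrightarrow> x k = y k) \<Longrightarrow> ip r x u = ip r y u"
  unfolding ip_def by (intro sum.cong) auto

lemma ip_linear_left: "ip r (\<lambda>k. a * x k + b * y k) u = a * ip r x u + b * ip r y u"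
  unfolding ip_def by (simp add: sum.distrib sum_distrib_left algebra_simps)

lemma ip_linear_right: "ip r x (\<lambda>k. a * u k + b * v k) = a * ip r x u + b * ip r x v"
  unfolding ip_def by (simp add: sum.distrib sum_distrib_left algebra_simps)

lemma ip_powers_coeff_vec:
  assumes "degree p < r"
  shows "ip r (\<lambda>k. t ^ (k - 1)) (coeff_vec p) = poly p t"
proof -
  have "ip r (\<lambda>k. t ^ (k - 1)) (coeff_vec p) = (\<Sum>k<r. t ^ k * coeff p k)"
    unfolding ip_def coeff_vec_def by (subst sum_bounds_lt_plus1[symmetric]) simp
  also have "\<dots> = (\<Sum>k\<le>degree p. t ^ k * coeff p k)"
    using assms by (intro sum.mono_neutral_right) (auto simp: coeff_eq_0)
  also have "\<dots> = poly p t" by (simp add: poly_altdef mult.commute)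
  finally show ?thesis .
qed

lemma degree_root_poly: "finite S \<Longrightarrow> degree (root_poly S) = card S"
  unfolding root_poly_def by (subst degree_prod_sum_eq) auto

lemma poly_root_poly: "poly (root_poly S) t = (\<Prod>i\<in>S. t - real i)"
  unfolding root_poly_def by (simp add: poly_prod)

lemma wall_form_moment:
  "finite S \<Longrightarrow> card S < r \<Longrightarrow> wall_form r S (moment i) = (\<Prod>s\<in>S. real i - real s)"
  using ip_powers_coeff_vec[of "root_poly S" r "real i"]
  by (simp add: wall_form_def degree_root_poly poly_root_poly moment_def[abs_def])

lemma wall_form_moment_eq_0_iff:
  "finite S \<Longrightarrow> card S < r \<Longrightarrow> wall_form r S (moment i) = 0 \<longleftrightarrow> i \<in> S"
  by (auto simp: wall_form_moment)

lemma wall_form_linear: "wall_form r S (\<lambda>k. a * x k + b * y k) = a * wall_form r S x + b * wall_form r S y"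
  unfolding wall_form_def by (rule ip_linear_left)

lemma wall_form_lin_comb:
  assumes "\<forall>k\<in>{1..r}. x k = (\<Sum>l\<in>T. b l * moment l k)"
  shows "wall_form r S x = (\<Sum>l\<in>T. b l * wall_form r S (moment l))"
proof -
  have "wall_form r S x = ip r (\<lambda>k. \<Sum>l\<in>T. b l * moment l k) (coeff_vec (root_poly S))"
    unfolding wall_form_def by (rule ip_cong) (use assms in auto)
  then show ?thesis by (simp add: ip_lin_comb wall_form_def)
qed

lemma wall_form_moment_basis:
  assumes T: "finite T" "card T = r" "i \<in> T"
    and rep: "\<forall>k\<in>{1..r}. x k = (\<Sum>l\<in>T. b l * moment l k)"
  shows "wall_form r (T - {i}) x = b i * wall_form r (T - {i}) (moment i)"
proof -
  have "card T > 0" using T card_gt_0_iff by blast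
  then have fin: "finite (T - {i})" and cs: "card (T - {i}) < r"
    using T by (auto simp: card_Diff_singleton)
  have "wall_form r (T - {i}) x = (\<Sum>l\<in>T. b l * wall_form r (T - {i}) (moment l))"
    by (rule wall_form_lin_comb[OF rep])
  also have "\<dots> = b i * wall_form r (T - {i}) (moment i) +
      (\<Sum>l\<in>T - {i}. b l * wall_form r (T - {i}) (moment l))"
    by (rule sum.remove[OF T(1,3)])
  also have "(\<Sum>l\<in>T - {i}. b l * wall_form r (T - {i}) (moment l)) = 0"
    using wall_form_moment_eq_0_iff[OF fin cs] by (intro sum.neutral) simp
  finally show ?thesis by simp
qed

lemma moment_lin_indep:
  assumes S: "finite S" "card S = r"
  shows "lin_indep_cols r moment S"
  unfolding lin_indep_cols_def
proof (intro allI impI ballI)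
  fix c i0 assume rel: "\<forall>k\<in>{1..r}. (\<Sum>i\<in>S. c i * moment i k) = 0" and i0: "i0 \<in> S"
  have "card S > 0" using S i0 card_gt_0_iff by blast
  then have "card (S - {i0}) < r" using S i0 by (simp add: card_Diff_singleton)
  then have "wall_form r (S - {i0}) (moment i0) \<noteq> 0"
    using S by (simp add: wall_form_moment_eq_0_iff)
  moreover have "wall_form r (S - {i0}) (\<lambda>k. 0) = c i0 * wall_form r (S - {i0}) (moment i0)"
    by (rule wall_form_moment_basis[OF S i0]) (use rel in simp)
  moreover have "wall_form r (S - {i0}) (\<lambda>k. 0) = 0" by (simp add: wall_form_def ip_def)
  ultimately show "c i0 = 0" by simp
qed

lemma moment_spanning:
  assumes "finite T" "card T = r"
  obtains b where "\<forall>k\<in>{1..r}. x k = (\<Sum>l\<in>T. b l * moment l k)"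
  using lin_indep_cols_spanning[OF assms moment_lin_indep[OF assms], of x] by metis

lemma lin_indep_cols_moment_config:
  assumes "finite S" "card S = r" "n \<notin> S"
  shows "lin_indep_cols r (moment_config n x) S"
proof -
  have "lin_indep_cols r (moment_config n x) S = lin_indep_cols r moment S"
    using assms(3) by (intro lin_indep_cols_cong) (auto simp: moment_config_def)
  then show ?thesis using moment_lin_indep[OF assms(1,2)] by simp
qed

lemma lin_relation_moment_config_insert:
  assumes "finite S" "n \<notin> S"
  shows "lin_relation r (moment_config n x) (insert n S) c \<longleftrightarrow>
    (\<forall>k\<in>{1..r}. c n * x k + (\<Sum>l\<in>S. c l * moment l k) = 0)"
proof -
  have "(\<Sum>i\<in>insert n S. c i * moment_config n x i k) = c n * x k + (\<Sum>l\<in>S. c l * moment l k)" for k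
    using assms by (simp add: moment_config_def) (intro sum.cong, auto)
  then show ?thesis by (simp add: lin_relation_def)
qed

lemma lin_relation_moment_config_rep:
  assumes "finite S" "n \<notin> S" "\<forall>k\<in>{1..r}. x k = (\<Sum>l\<in>S. b l * moment l k)"
  shows "lin_relation r (moment_config n x) (insert n S) (\<lambda>i. if i = n then c else - c * b i)"
proof -
  have "(\<Sum>l\<in>S. (if l = n then c else - c * b l) * moment l k) = - c * (\<Sum>l\<in>S. b l * moment l k)"
    for k
    using assms(2) by (simp add: sum_distrib_left mult.assoc) (intro sum.cong, auto)
  then show ?thesis using assms by (simp add: lin_relation_moment_config_insert)
qed

lemma moment_rep_of_lin_relation:
  assumes "finite S" "n \<notin> S" "lin_relation r (moment_config n x) (insert n S) c" "c n \<noteq> 0"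
  shows "\<forall>k\<in>{1..r}. x k = (\<Sum>l\<in>S. (- c l / c n) * moment l k)"
proof
  fix k assume "k \<in> {1..r}"
  then have "c n * x k + (\<Sum>l\<in>S. c l * moment l k) = 0"
    using assms(3) lin_relation_moment_config_insert[OF assms(1,2)] by blast
  then have "x k = - (\<Sum>l\<in>S. c l * moment l k) / c n" using assms(4) by (simp add: field_simps)
  then show "x k = (\<Sum>l\<in>S. (- c l / c n) * moment l k)"
    by (simp add: sum_divide_distrib sum_negf[symmetric])
qed

lemma moment_config_lin_indep_iff:
  assumes S: "finite S" "card S + 1 = r" "n \<notin> S"
  shows "lin_indep_cols r (moment_config n x) (insert n S) \<longleftrightarrow> wall_form r S x \<noteq> 0"
proof
  assume indep: "lin_indep_cols r (moment_config n x) (insert n S)"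
  define m where "m = Suc (Max (insert n S))"
  have m: "m \<notin> insert n S"
    using S Max_ge[of "insert n S"] unfolding m_def by (metis Suc_n_not_le_n finite_insert)
  have T: "finite (insert m S)" "card (insert m S) = r" using S m by auto
  then obtain b where b: "\<forall>k\<in>{1..r}. x k = (\<Sum>l\<in>insert m S. b l * moment l k)"
    using moment_spanning by blast
  have "insert m S - {m} = S" using m by auto
  then have "wall_form r S x = b m * wall_form r S (moment m)"
    using wall_form_moment_basis[OF T insertI1 b] by simp
  moreover have "wall_form r S (moment m) \<noteq> 0" using S m by (simp add: wall_form_moment_eq_0_iff)
  moreover have "b m \<noteq> 0"
  proof
    assume "b m = 0"
    then have "\<forall>k\<in>{1..r}. x k = (\<Sum>l\<in>S. b l * moment l k)" using b S m by simp
    then have "lin_relation r (moment_config n x) (insert n S) (\<lambda>i. if i = n then 1 else - 1 * b i)"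
      by (rule lin_relation_moment_config_rep[OF S(1,3)])
    then show False using indep lin_indep_cols_sum_eq_0 by fastforce
  qed
  ultimately show "wall_form r S x \<noteq> 0" by simp
next
  assume nz: "wall_form r S x \<noteq> 0"
  show "lin_indep_cols r (moment_config n x) (insert n S)"
    unfolding lin_indep_cols_def
  proof (intro allI impI ballI)
    fix c i assume "\<forall>k\<in>{1..r}. (\<Sum>i\<in>insert n S. c i * moment_config n x i k) = 0" and i: "i \<in> insert n S"
    then have rel: "lin_relation r (moment_config n x) (insert n S) c" by (simp add: lin_relation_def)
    have "c n = 0"
    proof (rule ccontr)
      assume "c n \<noteq> 0"
      from moment_rep_of_lin_relation[OF S(1,3) rel this]
      have "wall_form r S x = (\<Sum>l\<in>S. (- c l / c n) * wall_form r S (moment l))"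
        by (rule wall_form_lin_comb)
      also have "\<dots> = 0"
        using S wall_form_moment_eq_0_iff[of S r] by (intro sum.neutral) simp
      finally show False using nz by simp
    qed
    then have "\<forall>k\<in>{1..r}. (\<Sum>l\<in>S. c l * moment l k) = 0"
      using rel by (simp add: lin_relation_moment_config_insert[OF S(1,3)])
    then have "\<forall>k\<in>{1..card S}. (\<Sum>l\<in>S. c l * moment l k) = 0" using S(2) by auto
    then have "\<forall>l\<in>S. c l = 0"
      using moment_lin_indep[OF S(1) refl] unfolding lin_indep_cols_def by blast
    then show "c i = 0" using i \<open>c n = 0\<close> by auto
  qed
qed

lemma general_position_moment_config:
  assumes r: "1 \<le> r" and x: "generic r n x"
  shows "general_position r n (moment_config n x)"
  unfolding general_position_def
proof (intro allI impI)
  fix S assume S: "S \<subseteq> {1..n} \<and> card S = r"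
  then have fS: "finite S" using finite_subset by blast
  show "lin_indep_cols r (moment_config n x) S"
  proof (cases "n \<in> S")
    case True
    then have wall: "S - {n} \<in> walls r n" and S_eq: "insert n (S - {n}) = S"
      using S fS r by (auto simp: walls_def card_Diff_singleton)
    then have "wall_form r (S - {n}) x \<noteq> 0"
      using x by (simp add: generic_def)
    then show ?thesis
      using moment_config_lin_indep_iff[OF walls_memD(1,2,4)[OF wall]] S_eq by simp
  next
    case False
    then show ?thesis using lin_indep_cols_moment_config fS S by blast
  qed
qed

lemma ip_unit_first: "1 \<le> r \<Longrightarrow> ip r x (\<lambda>k. if k = 1 then 1 else 0) = x 1"
proof -
  assume "1 \<le> r"
  then have "ip r x (\<lambda>k. if k = 1 then 1 else 0) = (\<Sum>k\<in>{1}. x k * (if k = 1 then 1 else 0))"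
    unfolding ip_def by (intro sum.mono_neutral_right) auto
  then show ?thesis by simp
qed

lemma pointed_moment_config:
  assumes "1 \<le> r" "x 1 > 0" shows "pointed r n (moment_config n x)"
  unfolding pointed_def
proof (intro exI[of _ "\<lambda>k. if k = 1 then 1 else 0"] conjI ballI)
  show "nonzero_vec r (\<lambda>k. if k = 1 then 1 else (0::real))"
    using assms(1) by (auto simp: nonzero_vec_def)
  fix i
  have "ip r (moment_config n x i) (\<lambda>k. if k = 1 then 1 else 0) = moment_config n x i 1"
    using assms(1) by (rule ip_unit_first)
  then show "ip r (moment_config n x i) (\<lambda>k. if k = 1 then 1 else 0) > 0"
    using assms(2) by (simp add: moment_config_def moment_def)
qed

lemma generic_moment: "generic r n (moment n)"
  unfolding generic_def
proof
  fix S assume "S \<in> walls r n"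
  then show "wall_form r S (moment n) \<noteq> 0"
    using walls_memD[of S r n] wall_form_moment_eq_0_iff[of S r n] by simp
qed

section \<open>Wall crossings are mutations\<close>

definition seg_point :: "(nat \<Rightarrow> real) \<Rightarrow> (nat \<Rightarrow> real) \<Rightarrow> real \<Rightarrow> nat \<Rightarrow> real" where
  "seg_point x y s = (\<lambda>k. (1 - s) * x k + s * y k)"

definition crossing_time :: "nat \<Rightarrow> (nat \<Rightarrow> real) \<Rightarrow> (nat \<Rightarrow> real) \<Rightarrow> nat set \<Rightarrow> real" where
  "crossing_time r x y S = wall_form r S x / (wall_form r S x - wall_form r S y)"

definition same_chamber :: "nat \<Rightarrow> nat \<Rightarrow> (nat \<Rightarrow> real) \<Rightarrow> (nat \<Rightarrow> real) \<Rightarrow> bool" where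
  "same_chamber r n x y \<longleftrightarrow> (\<forall>S\<in>walls r n. sgn (wall_form r S x) = sgn (wall_form r S y))"

definition wall_crossing :: "nat \<Rightarrow> nat \<Rightarrow> nat set \<Rightarrow> (nat \<Rightarrow> real) \<Rightarrow> (nat \<Rightarrow> real) \<Rightarrow> bool" where
  "wall_crossing r n S0 x y \<longleftrightarrow> generic r n x \<and> generic r n y \<and> S0 \<in> walls r n \<and>
     (\<forall>S\<in>walls r n. S \<noteq> S0 \<longrightarrow> sgn (wall_form r S x) = sgn (wall_form r S y)) \<and>
     sgn (wall_form r S0 x) = - sgn (wall_form r S0 y)"

lemma wall_form_seg_point:
  "wall_form r S (seg_point x y s) = (1 - s) * wall_form r S x + s * wall_form r S y"
  unfolding seg_point_def by (rule wall_form_linear)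

lemma seg_point_0 [simp]: "seg_point x y 0 = x" and seg_point_1 [simp]: "seg_point x y 1 = y"
  by (auto simp: seg_point_def)

lemma affine_comb_sgn_same:
  fixes a b t :: real
  assumes "a \<noteq> 0" "sgn a = sgn b" "t \<in> {0..1}"
  shows "sgn ((1 - t) * a + t * b) = sgn a"
proof (cases "a > 0")
  case True
  then have "b > 0" using assms by (auto simp: sgn_if split: if_splits)
  then have "(1 - t) * a + t * b > 0" using True assms(3)
    by (cases "t = 0") (auto intro: add_nonneg_pos add_pos_nonneg)
  then show ?thesis using True by simp
next
  case False
  then have "a < 0" using assms by simp
  then have "b < 0" using assms by (auto simp: sgn_if split: if_splits)
  then have "(1 - t) * a + t * b < 0" using \<open>a < 0\<close> assms(3)
    by (cases "t = 0") (auto intro: add_nonpos_neg add_neg_nonpos simp: mult_nonneg_nonpos mult_pos_neg)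
  then show ?thesis using \<open>a < 0\<close> by simp
qed

text \<open>Writing (1 - t) a + t b = (a - b) (t0 - t) with t0 = a / (a - b) and sgn (a - b) = sgn a.\<close>
lemma affine_comb_sgn_opposite:
  fixes a b t :: real
  assumes a: "a \<noteq> 0" and ab: "sgn a = - sgn b"
  defines "t0 \<equiv> a / (a - b)"
  shows "t0 \<in> {0<..<1}"
    and "t < t0 \<Longrightarrow> sgn ((1 - t) * a + t * b) = sgn a"
    and "t0 < t \<Longrightarrow> sgn ((1 - t) * a + t * b) = sgn b"
    and "(1 - t) * a + t * b = 0 \<longleftrightarrow> t = t0"
proof -
  have ab': "a > 0 \<and> b < 0 \<or> a < 0 \<and> b > 0" using a ab by (auto simp: sgn_if split: if_splits)
  then have d: "a - b \<noteq> 0" "sgn (a - b) = sgn a" by auto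
  have eq: "(1 - t) * a + t * b = (a - b) * (t0 - t)"
    using d by (simp add: t0_def field_simps)
  show "t0 \<in> {0<..<1}" using ab' by (auto simp: t0_def divide_simps)
  show "t < t0 \<Longrightarrow> sgn ((1 - t) * a + t * b) = sgn a"
    unfolding eq using d by (simp add: sgn_mult)
  show "t0 < t \<Longrightarrow> sgn ((1 - t) * a + t * b) = sgn b"
    unfolding eq using d ab by (simp add: sgn_mult)
  show "(1 - t) * a + t * b = 0 \<longleftrightarrow> t = t0"
    unfolding eq using d by auto
qed

text \<open>Normalising the coefficient of the last column, the coefficient of each other column
  is read off, up to a common nonzero factor, from the wall spanned by the remaining ones.\<close>
lemma transfer_signed_relation:
  assumes T: "finite T" "card T = r" "n \<notin> T"
    and rel: "lin_relation r (moment_config n x) (insert n T) mu" and mu_n: "mu n \<noteq> 0"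
    and nz: "\<forall>i\<in>T. wall_form r (T - {i}) x \<noteq> 0"
  obtains mu' where "lin_relation r (moment_config n y) (insert n T) mu'" "mu' n = mu n"
    "\<forall>i\<in>T. sgn (mu' i) = sgn (wall_form r (T - {i}) x) * sgn (wall_form r (T - {i}) y) * sgn (mu i)"
proof -
  define a where "a = (\<lambda>l. - mu l / mu n)"
  have a: "\<forall>k\<in>{1..r}. x k = (\<Sum>l\<in>T. a l * moment l k)"
    unfolding a_def by (rule moment_rep_of_lin_relation[OF T(1,3) rel mu_n])
  obtain b where b: "\<forall>k\<in>{1..r}. y k = (\<Sum>l\<in>T. b l * moment l k)"
    using moment_spanning[OF T(1,2)] by blast
  define mu' where "mu' = (\<lambda>i. if i = n then mu n else - mu n * b i)"
  have "lin_relation r (moment_config n y) (insert n T) mu'"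
    unfolding mu'_def by (rule lin_relation_moment_config_rep[OF T(1,3) b])
  moreover have "sgn (mu' i) = sgn (wall_form r (T - {i}) x) * sgn (wall_form r (T - {i}) y) * sgn (mu i)"
    if i: "i \<in> T" for i
  proof -
    define q where "q = wall_form r (T - {i}) (moment i)"
    have qx: "wall_form r (T - {i}) x = a i * q" unfolding q_def by (rule wall_form_moment_basis[OF T(1,2) i a])
    have qy: "wall_form r (T - {i}) y = b i * q" unfolding q_def by (rule wall_form_moment_basis[OF T(1,2) i b])
    have "a i \<noteq> 0" "q \<noteq> 0" using nz i qx by auto
    then have "sgn (a i) * sgn (a i) = 1" "sgn q * sgn q = 1" by (auto simp: sgn_if)
    moreover have "mu i = - mu n * a i" using mu_n by (simp add: a_def)
    ultimately show ?thesis
      using i T(3) by (simp add: mu'_def qx qy sgn_mult) (metis (no_types, lifting) mult.commute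
          mult.left_commute mult.right_neutral)
  qed
  ultimately show ?thesis using that by (simp add: mu'_def)
qed

lemma lin_relation_moment_config_other:
  assumes "n \<notin> T"
  shows "lin_relation r (moment_config n x) T mu \<longleftrightarrow> lin_relation r (moment_config n y) T mu"
proof -
  have "(\<Sum>i\<in>T. mu i * moment_config n x i k) = (\<Sum>i\<in>T. mu i * moment_config n y i k)" for k
    using assms by (intro sum.cong) (auto simp: moment_config_def)
  then show ?thesis by (simp add: lin_relation_def)
qed

lemma wall_crossing_seg_point_other_walls:
  assumes wc: "wall_crossing r n S0 x y" and S: "S \<in> walls r n" "S \<noteq> S0" and t: "t \<in> {0..1}"
  shows "sgn (wall_form r S (seg_point x y t)) = sgn (wall_form r S x)"
    and "wall_form r S (seg_point x y t) \<noteq> 0"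
proof -
  have "wall_form r S x \<noteq> 0" "sgn (wall_form r S x) = sgn (wall_form r S y)"
    using wc S by (auto simp: wall_crossing_def generic_def)
  then show "sgn (wall_form r S (seg_point x y t)) = sgn (wall_form r S x)"
    unfolding wall_form_seg_point using t by (rule affine_comb_sgn_same)
  then show "wall_form r S (seg_point x y t) \<noteq> 0"
    using \<open>wall_form r S x \<noteq> 0\<close> by (auto simp: sgn_0_0)
qed

lemma wall_crossing_seg_point_wall:
  assumes wc: "wall_crossing r n S0 x y"
  shows "crossing_time r x y S0 \<in> {0<..<1}"
    and "wall_form r S0 (seg_point x y t) = 0 \<longleftrightarrow> t = crossing_time r x y S0"
proof -
  have "wall_form r S0 x \<noteq> 0" "sgn (wall_form r S0 x) = - sgn (wall_form r S0 y)"
    using wc by (auto simp: wall_crossing_def generic_def)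
  note opp = affine_comb_sgn_opposite[OF this]
  show "crossing_time r x y S0 \<in> {0<..<1}" unfolding crossing_time_def by (rule opp(1))
  show "wall_form r S0 (seg_point x y t) = 0 \<longleftrightarrow> t = crossing_time r x y S0"
    unfolding crossing_time_def wall_form_seg_point by (rule opp(4))
qed

lemma generic_seg_point:
  assumes "wall_crossing r n S0 x y" "t \<in> {0..1}" "t \<noteq> crossing_time r x y S0"
  shows "generic r n (seg_point x y t)"
  unfolding generic_def
proof
  fix S assume "S \<in> walls r n"
  then show "wall_form r S (seg_point x y t) \<noteq> 0"
    using assms wall_crossing_seg_point_other_walls(2)[OF assms(1) _ _ assms(2)]
      wall_crossing_seg_point_wall(2)[OF assms(1)] by (cases "S = S0") auto
qed

lemma moment_config_dependent_set_unique:
  assumes r: "1 \<le> r" and S0: "S0 \<in> walls r n"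
    and others: "\<forall>S\<in>walls r n. S \<noteq> S0 \<longrightarrow> wall_form r S z \<noteq> 0"
    and S: "S \<subseteq> {1..n}" "card S = r" "\<not> lin_indep_cols r (moment_config n z) S"
  shows "S = insert n S0"
proof -
  have fS: "finite S" using S(1) finite_subset by blast
  have "n \<in> S"
  proof (rule ccontr)
    assume "n \<notin> S"
    then have "lin_indep_cols r (moment_config n z) S"
      by (rule lin_indep_cols_moment_config[OF fS S(2)])
    then show False using S(3) by contradiction
  qed
  define S' where "S' = S - {n}"
  have S_eq: "S = insert n S'" using \<open>n \<in> S\<close> by (auto simp: S'_def)
  have "S' \<subseteq> {1..n - 1}"
  proof
    fix i assume "i \<in> S'"
    then have "i \<in> {1..n}" "i \<noteq> n" using S(1) by (auto simp: S'_def)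
    then show "i \<in> {1..n - 1}" by (simp, arith)
  qed
  moreover have "card S' + 1 = r" using S(2) fS \<open>n \<in> S\<close> r by (simp add: S'_def)
  ultimately have S'_wall: "S' \<in> walls r n" by (simp add: walls_def)
  have "\<not> lin_indep_cols r (moment_config n z) (insert n S')" using S(3) S_eq by simp
  then have "wall_form r S' z = 0"
    using moment_config_lin_indep_iff[OF walls_memD(1,2,4)[OF S'_wall]] by blast
  then have "S' = S0" using others S'_wall by blast
  then show ?thesis using S_eq by simp
qed

lemma moment_config_lin_indep_codim1:
  assumes r: "1 \<le> r" and n: "r + 1 \<le> n" and S0: "S0 \<in> walls r n"
    and others: "\<forall>S\<in>walls r n. S \<noteq> S0 \<longrightarrow> wall_form r S z \<noteq> 0"
    and S: "S \<subseteq> {1..n}" "card S = r - 1"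
  shows "lin_indep_cols r (moment_config n z) S"
proof -
  have fS: "finite S" using S(1) finite_subset by blast
  have "card ({1..n} - S) = n - (r - 1)" using S fS by (simp add: card_Diff_subset)
  then have "\<not> card ({1..n} - S) \<le> Suc 0" using n r by linarith
  then obtain e1 e2 where e: "e1 \<in> {1..n} - S" "e2 \<in> {1..n} - S" "e1 \<noteq> e2"
    using card_le_Suc0_iff_eq[of "{1..n} - S"] by auto
  have "insert e1 S \<noteq> insert n S0 \<or> insert e2 S \<noteq> insert n S0"
    using e by blast
  then obtain e where e: "e \<in> {1..n} - S" "insert e S \<noteq> insert n S0"
    using e by blast
  have "insert e S \<subseteq> {1..n}" "card (insert e S) = r" using e S fS r by auto
  then have "lin_indep_cols r (moment_config n z) (insert e S)"
    using moment_config_dependent_set_unique[OF r S0 others] e(2) by blast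
  then show ?thesis using lin_indep_cols_subset fS by blast
qed

lemma det_cols_moment_config_seg_point:
  assumes "S0 \<in> walls r n"
  obtains D0 D1 where
    "\<And>t. det_cols r (moment_config n (seg_point x y t)) (insert n S0) = (1 - t) * D0 + t * D1"
proof -
  define h where "h = (\<lambda>k. cofactor (col_mat r moment (insert n S0)) (k - 1) (r - 1))"
  have same: "\<forall>i\<in>S0. \<forall>k\<in>{1..r}. moment_config n z i k = moment i k" for z
    using walls_memD(4)[OF assms] by (auto simp: moment_config_def)
  have "det_cols r (moment_config n z) (insert n S0) = ip r (moment_config n z n) h" for z
    unfolding h_def by (rule det_cols_insert_greatest[OF walls_memD(1,2,5)[OF assms] same])
  moreover have "moment_config n z n = z" for z by (simp add: moment_config_def)
  ultimately have "det_cols r (moment_config n z) (insert n S0) = ip r z h" for z by simp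
  then show ?thesis
    using that[of "ip r x h" "ip r y h"] by (simp add: seg_point_def ip_linear_left)
qed

lemma mutation_path_of_wall_crossing:
  assumes r: "1 \<le> r" and n: "r + 1 \<le> n" and wc: "wall_crossing r n S0 x y"
  shows "mutation_path r n (moment_config n x) (moment_config n y)
    (\<lambda>t. moment_config n (seg_point x y t)) (crossing_time r x y S0) (insert n S0)"
proof -
  let ?P = "\<lambda>t. moment_config n (seg_point x y t)" and ?R = "insert n S0"
    and ?t0 = "crossing_time r x y S0"
  have S0: "S0 \<in> walls r n" using wc by (simp add: wall_crossing_def)
  note S0_facts = walls_memD[OF S0]
  have t0: "?t0 \<in> {0<..<1}" by (rule wall_crossing_seg_point_wall(1)[OF wc])
  have at_t0: "wall_form r S0 (seg_point x y ?t0) = 0"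
    "\<forall>S\<in>walls r n. S \<noteq> S0 \<longrightarrow> wall_form r S (seg_point x y ?t0) \<noteq> 0"
    using wall_crossing_seg_point_wall(2)[OF wc] wall_crossing_seg_point_other_walls(2)[OF wc] t0
    by auto
  have R: "?R \<subseteq> {1..n}" "card ?R = r" using S0_facts n by auto
  have dep: "\<not> lin_indep_cols r (?P ?t0) ?R"
    using moment_config_lin_indep_iff[OF S0_facts(1,2,4)] at_t0(1) by simp
  have gp: "general_position r n (?P t)" if "t \<in> {0..1}" "t \<noteq> ?t0" for t
    using general_position_moment_config[OF r generic_seg_point[OF wc that]] .
  obtain D0 D1 where D: "\<And>t. det_cols r (?P t) ?R = (1 - t) * D0 + t * D1"
    using det_cols_moment_config_seg_point[OF S0] by blast
  have "lin_indep_cols r (?P 0) ?R" using gp[of 0] t0 R by (simp add: general_position_def)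
  then have "D0 \<noteq> 0"
    using D[of 0] S0_facts(1) R by (simp add: lin_indep_cols_iff_det_cols)
  have "(1 - ?t0) * D0 + ?t0 * D1 = 0"
    using dep D[of ?t0] S0_facts(1) R by (simp add: lin_indep_cols_iff_det_cols)
  then have D1: "D1 = - ((1 - ?t0) / ?t0) * D0" using t0 by (simp add: field_simps)
  have "sgn ((1 - ?t0) / ?t0) = 1" using t0 by simp
  then have "sgn D0 = - sgn D1" by (simp add: D1 sgn_mult sgn_minus)
  have "D0 / (D0 - D1) = ?t0"
    using t0 \<open>D0 \<noteq> 0\<close> by (simp add: D1 field_simps)
  note opp = affine_comb_sgn_opposite[OF \<open>D0 \<noteq> 0\<close> \<open>sgn D0 = - sgn D1\<close>,
      unfolded \<open>D0 / (D0 - D1) = ?t0\<close>]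
  have flip: "sgn (det_cols r (?P s) ?R) = - sgn (det_cols r (?P s') ?R)"
    if "s \<in> {0..<?t0}" "s' \<in> {?t0<..1}" for s s'
    using opp(2)[of s] opp(3)[of s'] that \<open>sgn D0 = - sgn D1\<close> by (simp add: D)
  have cont: "continuous_on {0..1} (\<lambda>t. ?P t i k)" for i k
    by (cases "i = n") (auto simp: moment_config_def seg_point_def intro!: continuous_intros)
  have "\<forall>i\<in>{1..n}. \<forall>k\<in>{1..r}. ?P 0 i k = moment_config n x i k \<and> ?P 1 i k = moment_config n y i k"
    by simp
  then show ?thesis
    unfolding mutation_path_def
    using t0 gp R dep flip cont
      moment_config_dependent_set_unique[OF r S0 at_t0(2)]
      moment_config_lin_indep_codim1[OF r n S0 at_t0(2)]
    by blast
qed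

lemma differ_by_mutation_of_wall_crossing:
  "1 \<le> r \<Longrightarrow> r + 1 \<le> n \<Longrightarrow> wall_crossing r n S0 x y \<Longrightarrow>
    differ_by_mutation r n (moment_config n x) (moment_config n y)"
  unfolding differ_by_mutation_def using mutation_path_of_wall_crossing by blast

definition wall_circuit_signs :: "nat \<Rightarrow> nat \<Rightarrow> nat set \<Rightarrow> (nat \<Rightarrow> real) \<Rightarrow> (nat \<Rightarrow> real) \<Rightarrow> bool" where
  "wall_circuit_signs r n S0 x Y \<longleftrightarrow> (\<forall>j\<in>{1..n - 1} - S0. \<exists>mu.
     lin_relation r (moment_config n x) (insert j (insert n S0)) mu \<and>
     (\<forall>i\<in>insert j (insert n S0). sgn (mu i) = Y i))"

lemma walls_remove:
  assumes "T \<subseteq> {1..n - 1}" "card T = r" "i \<in> T"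
  shows "T - {i} \<in> walls r n"
proof -
  have "finite T" using assms(1) finite_subset by blast
  then have "card (T - {i}) + 1 = r" using assms(2,3) card_gt_0_iff[of T]
    by (auto simp: card_Diff_singleton)
  then show ?thesis using assms(1) by (auto simp: walls_def)
qed

lemma sgn_wall_form_sq:
  "generic r n x \<Longrightarrow> S \<in> walls r n \<Longrightarrow> sgn (wall_form r S x) * sgn (wall_form r S x) = 1"
  by (auto simp: generic_def sgn_if)

text \<open>A signed circuit of the configuration at y through the moving column n, whose
  remaining walls are not crossed, survives the wall crossing unchanged.\<close>
lemma signed_circuit_contains_crossed_wall:
  assumes r: "1 \<le> r" and n: "r + 1 \<le> n" and wc: "wall_crossing r n S0 y x"
    and X: "X \<in> signvecs r n (moment_config n x)"
    and T: "T \<subseteq> {1..n}" "card T = r + 1"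
    and rel: "lin_relation r (moment_config n y) T mu"
    and sgns: "\<forall>i\<in>T. sgn (mu i) = X i" and nz: "\<forall>i\<in>T. X i \<noteq> 0"
  shows "insert n S0 \<subseteq> T"
proof (rule ccontr)
  assume not_sub: "\<not> insert n S0 \<subseteq> T"
  have fT: "finite T" and T_ne: "T \<noteq> {}" using T finite_subset by auto
  show False
  proof (cases "n \<in> T")
    case False
    then have "lin_relation r (moment_config n x) T mu"
      using rel lin_relation_moment_config_other by blast
    then show False using signed_relation_not_covector[OF X T(1) T_ne _ sgns nz] by blast
  next
    case True
    define T' where "T' = T - {n}"
    have T': "finite T'" "card T' = r" "n \<notin> T'" "T' \<subseteq> {1..n - 1}" "T = insert n T'"
      using T fT True by (auto simp: T'_def)
    have walls: "T' - {i} \<in> walls r n" "T' - {i} \<noteq> S0" if "i \<in> T'" for i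
      using walls_remove[OF T'(4,2) that] not_sub that T'(5) by auto
    have gen: "generic r n y" "generic r n x" using wc by (auto simp: wall_crossing_def)
    have "\<forall>i\<in>T'. wall_form r (T' - {i}) y \<noteq> 0" using gen walls by (auto simp: generic_def)
    then obtain mu' where rel': "lin_relation r (moment_config n x) (insert n T') mu'"
      and mu'_n: "mu' n = mu n"
      and sgn': "\<forall>i\<in>T'. sgn (mu' i) = sgn (wall_form r (T' - {i}) y) *
        sgn (wall_form r (T' - {i}) x) * sgn (mu i)"
      using transfer_signed_relation[OF T'(1-3), of y mu x] rel T'(5) sgns nz True
      by (metis sgn_0_0)
    have "sgn (mu' i) = X i" if "i \<in> T" for i
    proof (cases "i = n")
      case True then show ?thesis using mu'_n sgns \<open>n \<in> T\<close> by simp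
    next
      case False
      then have "i \<in> T'" using that T'(5) by simp
      then have "sgn (wall_form r (T' - {i}) y) = sgn (wall_form r (T' - {i}) x)"
        using wc walls by (simp add: wall_crossing_def)
      then show ?thesis
        using sgn'[rule_format, OF \<open>i \<in> T'\<close>] sgn_wall_form_sq[OF gen(1) walls(1)[OF \<open>i \<in> T'\<close>]]
          sgns that by simp
    qed
    then show False
      using signed_relation_not_covector[OF X T(1) T_ne _ _ nz] rel' T'(5) by blast
  qed
qed

lemma wall_circuit_across_crossed_wall:
  assumes wc: "wall_crossing r n S0 y x" and j: "j \<in> {1..n - 1} - S0"
    and rel: "lin_relation r (moment_config n y) (insert j (insert n S0)) mu" and mu_n: "mu n \<noteq> 0"
  obtains mu' where "lin_relation r (moment_config n x) (insert j (insert n S0)) mu'"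
    "sgn (mu' j) = - sgn (mu j)" "\<forall>i\<in>insert n S0. sgn (mu' i) = sgn (mu i)"
proof -
  have S0: "S0 \<in> walls r n" and gen: "generic r n y" "generic r n x"
    using wc by (auto simp: wall_crossing_def)
  note S0_facts = walls_memD[OF S0]
  have "S0 \<subseteq> {1..n - 1}" using S0 by (simp add: walls_def)
  define T where "T = insert j S0"
  have T: "finite T" "card T = r" "n \<notin> T" "T \<subseteq> {1..n - 1}" "insert n T = insert j (insert n S0)"
    using S0_facts \<open>S0 \<subseteq> {1..n - 1}\<close> j by (auto simp: T_def)
  have walls: "T - {i} \<in> walls r n" if "i \<in> T" for i using walls_remove[OF T(4,2) that] .
  have "\<forall>i\<in>T. wall_form r (T - {i}) y \<noteq> 0" using gen walls by (auto simp: generic_def)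
  then obtain mu' where rel': "lin_relation r (moment_config n x) (insert n T) mu'"
    and mu'_n: "mu' n = mu n"
    and sgn': "\<forall>i\<in>T. sgn (mu' i) = sgn (wall_form r (T - {i}) y) *
      sgn (wall_form r (T - {i}) x) * sgn (mu i)"
    using transfer_signed_relation[OF T(1-3), of y mu x] rel T(5) mu_n by metis
  have "T - {j} = S0" using j by (auto simp: T_def)
  then have "sgn (mu' j) = - sgn (mu j)"
    using sgn'[rule_format, of j] wc sgn_wall_form_sq[OF gen(1) S0]
    by (simp add: T_def wall_crossing_def)
  moreover have "sgn (mu' i) = sgn (mu i)" if "i \<in> S0" for i
  proof -
    have "i \<in> T" "T - {i} \<noteq> S0" using that j by (auto simp: T_def)
    then have "sgn (wall_form r (T - {i}) y) = sgn (wall_form r (T - {i}) x)"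
      using wc walls by (simp add: wall_crossing_def)
    then show ?thesis
      using sgn'[rule_format, OF \<open>i \<in> T\<close>] sgn_wall_form_sq[OF gen(1) walls[OF \<open>i \<in> T\<close>]] by simp
  qed
  ultimately show ?thesis using that rel' T(5) mu'_n by auto
qed

lemma pm_vecs_memD:
  assumes "Y \<in> pm_vecs n"
  shows "i \<in> {1..n} \<Longrightarrow> Y i = 1 \<or> Y i = -1" "i \<notin> {1..n} \<Longrightarrow> Y i = 0"
    "i \<in> {1..n} \<Longrightarrow> Y i \<noteq> 0"
proof -
  show one: "i \<in> {1..n} \<Longrightarrow> Y i = 1 \<or> Y i = -1" using assms by (simp add: pm_vecs_def)
  show "i \<notin> {1..n} \<Longrightarrow> Y i = 0" using assms by (simp add: pm_vecs_def)
  show "i \<in> {1..n} \<Longrightarrow> Y i \<noteq> 0" using one by auto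
qed

lemma wall_circuit_subset:
  assumes "S0 \<in> walls r n" "j \<in> {1..n - 1} - S0"
  shows "insert j (insert n S0) \<subseteq> {1..n}"
  using assms walls_memD(3)[OF assms(1)] by auto

lemma new_signvec_agrees_off_circuit:
  assumes wc: "wall_crossing r n S0 y x"
    and X: "X \<in> signvecs r n (moment_config n x)" "X \<in> pm_vecs n"
    and Y: "Y \<in> pm_vecs n" and circ: "wall_circuit_signs r n S0 y Y"
    and e: "e = 1 \<or> e = -1" and agree: "\<forall>l\<in>insert n S0. X l = e * Y l"
    and i: "i \<in> {1..n - 1} - S0"
  shows "X i = e * Y i"
proof (rule ccontr)
  assume ne: "X i \<noteq> e * Y i"
  have S0: "S0 \<in> walls r n" using wc by (simp add: wall_crossing_def)
  let ?C = "insert i (insert n S0)"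
  have C: "?C \<subseteq> {1..n}" by (rule wall_circuit_subset[OF S0 i])
  have "n \<ge> 1" using i by auto
  obtain mu where rel: "lin_relation r (moment_config n y) ?C mu" and sgns: "\<forall>l\<in>?C. sgn (mu l) = Y l"
    using circ i unfolding wall_circuit_signs_def by blast
  then have "mu n \<noteq> 0" using pm_vecs_memD(3)[OF Y, of n] \<open>n \<ge> 1\<close> by fastforce
  then obtain mu' where rel': "lin_relation r (moment_config n x) ?C mu'"
    and sgn_i: "sgn (mu' i) = - sgn (mu i)" and sgn_R: "\<forall>l\<in>insert n S0. sgn (mu' l) = sgn (mu l)"
    using wall_circuit_across_crossed_wall[OF wc i rel] by blast
  have "X i = - e * Y i"
    using ne pm_vecs_memD(1)[OF X(2), of i] pm_vecs_memD(1)[OF Y, of i] e C by auto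
  moreover have "sgn e = e" using e by auto
  ultimately have "\<forall>l\<in>?C. sgn (e * mu' l) = X l"
    using sgn_i sgn_R sgns agree by (simp add: sgn_mult)
  moreover have "lin_relation r (moment_config n x) ?C (\<lambda>l. e * mu' l)"
    by (rule lin_relation_scaled[OF rel'])
  moreover have "\<forall>l\<in>?C. X l \<noteq> 0" using pm_vecs_memD(3)[OF X(2)] C by blast
  ultimately show False using signed_relation_not_covector[OF X(1) C] by blast
qed

lemma new_signvec_eq_pm:
  assumes r: "1 \<le> r" and n: "r + 1 \<le> n" and wc: "wall_crossing r n S0 y x"
    and Y: "Y \<in> pm_vecs n" and circ: "wall_circuit_signs r n S0 y Y"
    and X: "X \<in> signvecs r n (moment_config n x)" "X \<notin> signvecs r n (moment_config n y)"
      "X \<in> pm_vecs n"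
  shows "X = Y \<or> X = (\<lambda>i. - Y i)"
proof -
  have S0: "S0 \<in> walls r n" and gy: "generic r n y" using wc by (auto simp: wall_crossing_def)
  note S0_facts = walls_memD[OF S0]
  have S0_sub: "S0 \<subseteq> {1..n - 1}" using S0 by (simp add: walls_def)
  have gp: "general_position r n (moment_config n y)"
    by (rule general_position_moment_config[OF r gy])
  obtain T mu where T: "T \<subseteq> {1..n}" "card T = r + 1" and rel: "lin_relation r (moment_config n y) T mu"
    and sgns: "\<forall>i\<in>T. sgn (mu i) = X i"
    using signed_circuit_if_not_signvec[OF gp r _ X(3,2)] n by auto
  have X_nz: "\<forall>i\<in>T. X i \<noteq> 0" using pm_vecs_memD(3)[OF X(3)] T by blast
  then have mu_nz: "\<forall>i\<in>T. mu i \<noteq> 0" using sgns by fastforce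
  have R: "insert n S0 \<subseteq> T"
    by (rule signed_circuit_contains_crossed_wall[OF r n wc X(1) T rel sgns X_nz])
  have "finite T" using T finite_subset by blast
  then have "card (T - insert n S0) = 1" using R T S0_facts by (simp add: card_Diff_subset)
  then obtain j where "T - insert n S0 = {j}" by (auto simp: card_Suc_eq)
  then have T_eq: "T = insert j (insert n S0)" and "j \<in> T - insert n S0" using R by auto
  then have "j \<in> {1..n}" "j \<noteq> n" "j \<notin> S0" using T(1) by auto
  then have j: "j \<in> {1..n - 1} - S0" by (simp, arith)
  obtain muY where relY: "lin_relation r (moment_config n y) T muY" and sgnY: "\<forall>i\<in>T. sgn (muY i) = Y i"
    using circ j T_eq unfolding wall_circuit_signs_def by blast
  obtain c where c: "\<forall>i\<in>T. muY i = c * mu i"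
    using lin_relation_unique[OF gp T rel relY mu_nz] by blast
  define e where "e = sgn c"
  have "j \<in> T" using T_eq by simp
  then have "Y j \<noteq> 0" using pm_vecs_memD(3)[OF Y] T(1) by blast
  then have "muY j \<noteq> 0" using sgnY \<open>j \<in> T\<close> by force
  then have "c \<noteq> 0" using c \<open>j \<in> T\<close> by force
  then have e: "e = 1 \<or> e = -1" by (auto simp: e_def sgn_if)
  have on_T: "X i = e * Y i" if "i \<in> T" for i
  proof -
    have "Y i = e * X i" using sgnY sgns c that by (simp add: sgn_mult e_def)
    then show ?thesis using e by auto
  qed
  have "X i = e * Y i" for i
  proof (cases "i \<in> {1..n}")
    case True
    show ?thesis
    proof (cases "i \<in> T")
      case False
      then have "i \<in> {1..n - 1} - S0" using True T_eq by auto
      then show ?thesis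
        using new_signvec_agrees_off_circuit[OF wc X(1,3) Y circ e] on_T T_eq by blast
    qed (rule on_T)
  next
    case False
    then show ?thesis using pm_vecs_memD(2)[OF X(3)] pm_vecs_memD(2)[OF Y] by simp
  qed
  then show ?thesis using e by auto
qed

theorem new_signvecs_of_wall_crossing:
  assumes r: "1 \<le> r" and n: "r + 1 \<le> n" and wc: "wall_crossing r n S0 y x"
    and Y: "Y \<in> pm_vecs n" "Y \<in> signvecs r n (moment_config n x)"
    and circ: "wall_circuit_signs r n S0 y Y"
  shows "(signvecs r n (moment_config n x) - signvecs r n (moment_config n y)) \<inter> pm_vecs n =
    {Y, \<lambda>i. - Y i}"
proof
  show "(signvecs r n (moment_config n x) - signvecs r n (moment_config n y)) \<inter> pm_vecs n \<subseteq>
      {Y, \<lambda>i. - Y i}"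
    using new_signvec_eq_pm[OF r n wc Y(1) circ] by blast
next
  have S0: "S0 \<in> walls r n" using wc by (simp add: wall_crossing_def)
  have "\<not> {1..n - 1} \<subseteq> S0"
  proof
    assume "{1..n - 1} \<subseteq> S0"
    then have "card {1..n - 1} \<le> card S0" using card_mono walls_memD(1)[OF S0] by blast
    then show False using walls_memD(2)[OF S0] n by simp
  qed
  then obtain j where j: "j \<in> {1..n - 1} - S0" by blast
  let ?C = "insert j (insert n S0)"
  have C: "?C \<subseteq> {1..n}" "?C \<noteq> {}" using wall_circuit_subset[OF S0 j] by auto
  obtain mu where rel: "lin_relation r (moment_config n y) ?C mu" and sgns: "\<forall>i\<in>?C. sgn (mu i) = Y i"
    using circ j unfolding wall_circuit_signs_def by blast
  have nz: "\<forall>i\<in>?C. Y i \<noteq> 0" "\<forall>i\<in>?C. - Y i \<noteq> 0" using pm_vecs_memD(3)[OF Y(1)] C by auto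
  have "Y \<notin> signvecs r n (moment_config n y)"
    using signed_relation_not_covector[OF _ C rel sgns nz(1)] by blast
  moreover have "(\<lambda>i. - Y i) \<notin> signvecs r n (moment_config n y)"
  proof -
    have "\<forall>i\<in>?C. sgn (-1 * mu i) = - Y i" using sgns by (simp add: sgn_minus)
    then show ?thesis
      using signed_relation_not_covector[OF _ C lin_relation_scaled[OF rel, of "-1"] _ nz(2)] by blast
  qed
  ultimately show "{Y, \<lambda>i. - Y i} \<subseteq>
      (signvecs r n (moment_config n x) - signvecs r n (moment_config n y)) \<inter> pm_vecs n"
    using Y signvecs_uminus[OF Y(2)] pm_vecs_uminus[OF Y(1)] by auto
qed

section \<open>Walks through the chambers\<close>

definition separating_walls :: "nat \<Rightarrow> nat \<Rightarrow> (nat \<Rightarrow> real) \<Rightarrow> (nat \<Rightarrow> real) \<Rightarrow> nat set set" where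
  "separating_walls r n x y = {S\<in>walls r n. sgn (wall_form r S x) \<noteq> sgn (wall_form r S y)}"

definition adjacent :: "nat \<Rightarrow> nat \<Rightarrow> (nat \<Rightarrow> real) \<Rightarrow> (nat \<Rightarrow> real) \<Rightarrow> bool" where
  "adjacent r n x y \<longleftrightarrow> (\<exists>S. wall_crossing r n S x y)"

lemma nonzero_if_sgn_eq: "sgn (a::real) = sgn b \<Longrightarrow> b \<noteq> 0 \<Longrightarrow> a \<noteq> 0"
  by (auto simp: sgn_0_0)

lemma finite_separating_walls: "finite (separating_walls r n x y)"
  using finite_walls by (simp add: separating_walls_def)

lemma separating_walls_opposite:
  assumes "generic r n x" "generic r n y" "S \<in> separating_walls r n x y"
  shows "wall_form r S x \<noteq> 0" "sgn (wall_form r S x) = - sgn (wall_form r S y)"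
  using assms by (auto simp: separating_walls_def generic_def sgn_if split: if_splits)

lemma same_chamber_iff_separating_walls:
  "same_chamber r n x y \<longleftrightarrow> separating_walls r n x y = {}"
  by (auto simp: same_chamber_def separating_walls_def)

lemma crossing_time_seg_point:
  assumes "wall_form r S x \<noteq> wall_form r S y" "s \<noteq> 1"
  shows "crossing_time r (seg_point x y s) y S = (crossing_time r x y S - s) / (1 - s)"
  using assms by (simp add: crossing_time_def wall_form_seg_point field_simps)

text \<open>Walking along the segment from x to y, stop just after the first wall crossing.\<close>
lemma first_crossing_step:
  assumes gx: "generic r n x" and gy: "generic r n y" and pos: "x 1 > 0" "y 1 > 0"
    and inj: "inj_on (crossing_time r x y) (separating_walls r n x y)"
    and ne: "separating_walls r n x y \<noteq> {}"
  obtains z where "adjacent r n x z" "generic r n z" "z 1 > 0"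
    "separating_walls r n z y \<subset> separating_walls r n x y"
    "inj_on (crossing_time r z y) (separating_walls r n z y)"
proof -
  let ?K = "separating_walls r n x y" and ?t = "crossing_time r x y"
  note opp = separating_walls_opposite[OF gx gy]
  have t_range: "?t S \<in> {0<..<1}" if "S \<in> ?K" for S
    unfolding crossing_time_def using affine_comb_sgn_opposite(1)[OF opp[OF that]] .
  define t1 where "t1 = Min (?t ` ?K)"
  have "t1 \<in> ?t ` ?K" unfolding t1_def using finite_separating_walls ne by (intro Min_in) auto
  then obtain S1 where S1: "S1 \<in> ?K" "?t S1 = t1" by blast
  have t1_le: "t1 \<le> ?t S" if "S \<in> ?K" for S unfolding t1_def using finite_separating_walls that by simp
  define t2 where "t2 = Min (insert 1 (?t ` (?K - {S1})))"
  have t2_le1: "t2 \<le> 1" unfolding t2_def using finite_separating_walls by simp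
  have t2_le: "t2 \<le> ?t S" if "S \<in> ?K - {S1}" for S
    unfolding t2_def using finite_separating_walls that by simp
  have "t2 \<in> insert 1 (?t ` (?K - {S1}))" unfolding t2_def using finite_separating_walls by (intro Min_in) auto
  moreover have "t1 < ?t S" if "S \<in> ?K - {S1}" for S
  proof -
    have "?t S \<noteq> ?t S1" using inj S1(1) that unfolding inj_on_def by blast
    then show ?thesis using order_le_neq_trans[OF t1_le[of S]] that S1(2) by auto
  qed
  ultimately have "t1 < t2" using t_range[OF S1(1)] S1(2) by auto
  define s where "s = (t1 + t2) / 2"
  have "t1 < s" "s < t2" using \<open>t1 < t2\<close> by (simp_all add: s_def)
  have s4: "\<forall>S\<in>?K - {S1}. s < ?t S"
  proof
    fix S assume "S \<in> ?K - {S1}"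
    show "s < ?t S" using less_le_trans[OF \<open>s < t2\<close> t2_le[OF \<open>S \<in> ?K - {S1}\<close>]] .
  qed
  have s: "t1 < s" "0 < s" "s < 1" "\<forall>S\<in>?K - {S1}. s < ?t S"
    using \<open>t1 < s\<close> \<open>s < t2\<close> t2_le1 t_range[OF S1(1)] S1(2) s4 by auto
  define z where "z = seg_point x y s"
  have Qz: "wall_form r S z = (1 - s) * wall_form r S x + s * wall_form r S y" for S
    unfolding z_def by (rule wall_form_seg_point)
  have same_x: "sgn (wall_form r S z) = sgn (wall_form r S x)" if "S \<in> walls r n" "S \<noteq> S1" for S
  proof (cases "S \<in> ?K")
    case True
    then have "s < ?t S" using s(4) that(2) by blast
    then show ?thesis
      unfolding Qz using affine_comb_sgn_opposite(2)[OF opp[OF True]] by (simp add: crossing_time_def)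
  next
    case False
    then have "sgn (wall_form r S x) = sgn (wall_form r S y)" "wall_form r S x \<noteq> 0"
      using that gx by (auto simp: separating_walls_def generic_def)
    then show ?thesis unfolding Qz using affine_comb_sgn_same s by simp
  qed
  have "?t S1 < s" using s(1) S1(2) by simp
  then have same_y: "sgn (wall_form r S1 z) = sgn (wall_form r S1 y)"
    unfolding Qz using affine_comb_sgn_opposite(3)[OF opp[OF S1(1)]] by (simp add: crossing_time_def)
  have gz: "generic r n z"
    unfolding generic_def
  proof
    fix S assume S: "S \<in> walls r n"
    show "wall_form r S z \<noteq> 0"
    proof (cases "S = S1")
      case True then show ?thesis
        using nonzero_if_sgn_eq[OF same_y] gy S by (simp add: generic_def)
    next
      case False then show ?thesis
        using nonzero_if_sgn_eq[OF same_x[OF S False]] gx S by (simp add: generic_def)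
    qed
  qed
  have "S1 \<in> walls r n" using S1(1) by (simp add: separating_walls_def)
  moreover have "\<forall>S\<in>walls r n. S \<noteq> S1 \<longrightarrow> sgn (wall_form r S x) = sgn (wall_form r S z)"
    using same_x by simp
  moreover have "sgn (wall_form r S1 x) = - sgn (wall_form r S1 z)"
    using same_y opp(2)[OF S1(1)] by simp
  ultimately have "wall_crossing r n S1 x z"
    unfolding wall_crossing_def using gx gz by blast
  then have adj: "adjacent r n x z" by (auto simp: adjacent_def)
  have "S \<in> separating_walls r n z y \<longleftrightarrow> S \<in> ?K - {S1}" for S
  proof (cases "S = S1")
    case True then show ?thesis using same_y by (simp add: separating_walls_def)
  next
    case False then show ?thesis using same_x[of S] by (auto simp: separating_walls_def)
  qed
  then have K': "separating_walls r n z y = ?K - {S1}" by blast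
  have inj': "inj_on (crossing_time r z y) (?K - {S1})"
  proof (rule inj_onI)
    fix S S' assume S: "S \<in> ?K - {S1}" "S' \<in> ?K - {S1}" and eq: "crossing_time r z y S = crossing_time r z y S'"
    have "wall_form r T x \<noteq> wall_form r T y" if "T \<in> ?K" for T
      using that by (auto simp: separating_walls_def)
    then have "(?t S - s) / (1 - s) = (?t S' - s) / (1 - s)"
      using eq S s(3) unfolding z_def by (simp add: crossing_time_seg_point)
    then have "?t S = ?t S'" using s(3) by (simp add: divide_cancel_right)
    then show "S = S'" using inj S unfolding inj_on_def by blast
  qed
  have "z 1 > 0"
    using pos s by (simp add: z_def seg_point_def add_pos_pos)
  moreover have "?K - {S1} \<subset> ?K" using S1(1) by blast
  ultimately show ?thesis
    using that[OF adj gz] inj' unfolding K' by blast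
qed

lemma chamber_walk_distinct_times:
  assumes "generic r n x" "generic r n y" "x 1 > 0" "y 1 > 0"
    "inj_on (crossing_time r x y) (separating_walls r n x y)"
  obtains xs where "xs \<noteq> []" "hd xs = x" "same_chamber r n (last xs) y"
    "successively (adjacent r n) xs" "\<forall>z\<in>set xs. generic r n z \<and> z 1 > 0"
proof -
  have "\<exists>xs. xs \<noteq> [] \<and> hd xs = x \<and> same_chamber r n (last xs) y \<and>
      successively (adjacent r n) xs \<and> (\<forall>z\<in>set xs. generic r n z \<and> z 1 > 0)"
    using assms
  proof (induction "card (separating_walls r n x y)" arbitrary: x rule: less_induct)
    case less
    show ?case
    proof (cases "separating_walls r n x y = {}")
      case True
      then show ?thesis using less.prems
        by (intro exI[of _ "[x]"]) (simp add: same_chamber_iff_separating_walls)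
    next
      case False
      obtain z where z: "adjacent r n x z" "generic r n z" "z 1 > 0"
        "separating_walls r n z y \<subset> separating_walls r n x y"
        "inj_on (crossing_time r z y) (separating_walls r n z y)"
        using first_crossing_step[OF less.prems False] .
      have "card (separating_walls r n z y) < card (separating_walls r n x y)"
        using z(4) finite_separating_walls by (rule psubset_card_mono[rotated])
      then obtain zs where "zs \<noteq> []" "hd zs = z" "same_chamber r n (last zs) y"
        "successively (adjacent r n) zs" "\<forall>w\<in>set zs. generic r n w \<and> w 1 > 0"
        using less.hyps z(2,3,5) less.prems(2,4) by blast
      then show ?thesis
        using z(1) less.prems(1,3) by (intro exI[of _ "x # zs"]) (auto simp: successively_Cons)
    qed
  qed
  then show ?thesis using that by blast
qed

lemma ex_inj_image_notin_finite:
  fixes f :: "nat \<Rightarrow> 'a"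
  assumes "inj f" "finite B"
  obtains l where "f l \<notin> B"
proof -
  have "infinite (range f)" using assms(1) finite_imageD by blast
  then show ?thesis using assms(2) that by (meson finite_subset image_subsetI)
qed

text \<open>Along w = \<Sum>m = 1..n - 1. \<zeta>^m * moment m the values of the wall forms are polynomials
  in \<zeta> that are pairwise non-proportional, relative to the values at a generic point; a
  non-root \<zeta> gives a direction that separates all crossing times.\<close>
lemma ex_direction_separating_walls:
  assumes n: "2 \<le> n" and a: "\<forall>S\<in>walls r n. a S \<noteq> 0"
  obtains w where "\<forall>S\<in>walls r n. \<forall>S'\<in>walls r n. S \<noteq> S' \<longrightarrow>
      a S * wall_form r S' w \<noteq> a S' * wall_form r S w" "w 1 > 0"
proof -
  define w where "w = (\<lambda>z::real. \<lambda>k. \<Sum>m\<in>{1..n - 1}. z ^ m * moment m k)"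
  define c where "c = (\<lambda>(S, S') d. if d \<in> {1..n - 1}
    then a S * wall_form r S' (moment d) - a S' * wall_form r S (moment d) else 0)"
  have poly: "a S * wall_form r S' (w z) - a S' * wall_form r S (w z) = (\<Sum>d\<le>n - 1. c (S, S') d * z ^ d)"
    for S S' z
  proof -
    have "wall_form r T (w z) = (\<Sum>m\<in>{1..n - 1}. z ^ m * wall_form r T (moment m))" for T
      by (rule wall_form_lin_comb) (simp add: w_def)
    then have "a S * wall_form r S' (w z) - a S' * wall_form r S (w z) =
        (\<Sum>d\<in>{1..n - 1}. c (S, S') d * z ^ d)"
      by (simp add: c_def sum_distrib_left sum_subtractf algebra_simps)
    also have "\<dots> = (\<Sum>d\<le>n - 1. c (S, S') d * z ^ d)"
      by (intro sum.mono_neutral_left) (auto simp: c_def)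
    finally show ?thesis .
  qed
  define P where "P = {(S, S'). S \<in> walls r n \<and> S' \<in> walls r n \<and> S \<noteq> S'}"
  have "finite P" using finite_walls by (auto simp: P_def intro: finite_subset[of _ "walls r n \<times> walls r n"])
  moreover have "finite {z. (\<Sum>d\<le>n - 1. c p d * z ^ d) = 0}" if pP: "p \<in> P" for p
  proof -
    obtain S S' where p: "p = (S, S')" "S \<in> walls r n" "S' \<in> walls r n" "S \<noteq> S'"
      using pP by (cases p) (auto simp: P_def)
    note S = walls_memD[OF p(2)] and S' = walls_memD[OF p(3)]
    have "\<not> S \<subseteq> S'"
    proof
      assume "S \<subseteq> S'"
      then have "S = S'" using card_subset_eq[OF S'(1)] S(2) S'(2) by simp
      then show False using p(4) by contradiction
    qed
    then obtain d where d: "d \<in> S" "d \<notin> S'" by blast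
    have d_range: "d \<in> {1..n - 1}" using d p(2) by (auto simp: walls_def)
    have "wall_form r S (moment d) = 0" "wall_form r S' (moment d) \<noteq> 0"
      using d S S' by (simp_all add: wall_form_moment_eq_0_iff)
    then have "c p d = a S * wall_form r S' (moment d)" "a S * wall_form r S' (moment d) \<noteq> 0"
      using d_range a p(2) by (simp_all add: c_def p(1))
    then have "\<exists>i\<le>n - 1. c p i \<noteq> 0" using d_range by auto
    then show ?thesis using polyfun_finite_roots by blast
  qed
  ultimately have "finite (\<Union>p\<in>P. {z. (\<Sum>d\<le>n - 1. c p d * z ^ d) = 0})" by blast
  moreover have "inj (\<lambda>l::nat. real l + 1)" by (auto simp: inj_on_def)
  ultimately obtain l where l: "real l + 1 \<notin> (\<Union>p\<in>P. {z. (\<Sum>d\<le>n - 1. c p d * z ^ d) = 0})"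
    using ex_inj_image_notin_finite by blast
  have "a S * wall_form r S' (w (real l + 1)) \<noteq> a S' * wall_form r S (w (real l + 1))"
    if "S \<in> walls r n" "S' \<in> walls r n" "S \<noteq> S'" for S S'
  proof -
    have "(S, S') \<in> P" using that by (simp add: P_def)
    then have "(\<Sum>d\<le>n - 1. c (S, S') d * (real l + 1) ^ d) \<noteq> 0" using l by blast
    then show ?thesis using poly[of S S' "real l + 1"] by simp
  qed
  moreover have "w (real l + 1) 1 > 0"
    using n by (simp add: w_def moment_def) (intro sum_pos, auto)
  ultimately show ?thesis using that by blast
qed

lemma perturb_distinct_crossing_times:
  assumes n: "2 \<le> n" and gx: "generic r n x" and gy: "generic r n y" and py: "y 1 > 0"
  obtains y' where "generic r n y'" "y' 1 > 0" "same_chamber r n y' y"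
    "inj_on (crossing_time r x y') (separating_walls r n x y')"
proof -
  define a where "a = (\<lambda>S. wall_form r S x)"
  define b where "b = (\<lambda>S. wall_form r S y)"
  have a: "\<forall>S\<in>walls r n. a S \<noteq> 0" and b: "\<forall>S\<in>walls r n. b S \<noteq> 0"
    using gx gy by (auto simp: a_def b_def generic_def)
  obtain w where w: "\<forall>S\<in>walls r n. \<forall>S'\<in>walls r n. S \<noteq> S' \<longrightarrow>
      a S * wall_form r S' w \<noteq> a S' * wall_form r S w" and w1: "w 1 > 0"
    using ex_direction_separating_walls[OF n a] by blast
  define g where "g = (\<lambda>S. wall_form r S w)"
  define bad where "bad = (\<Union>S\<in>walls r n. \<Union>S'\<in>walls r n.
    {- (a S * b S' - a S' * b S) / (a S * g S' - a S' * g S)})"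
  have "finite bad" unfolding bad_def using finite_walls by blast
  define M where "M = (\<Sum>S\<in>walls r n. \<bar>g S\<bar> / \<bar>b S\<bar>)"
  define e0 where "e0 = 1 / (1 + M)"
  have "M \<ge> 0" by (simp add: M_def sum_nonneg)
  then have e0: "e0 > 0" by (simp add: e0_def)
  have "inj (\<lambda>l::nat. e0 / (real l + 2))" using e0 by (auto simp: inj_on_def field_simps)
  then obtain l where l: "e0 / (real l + 2) \<notin> bad" using ex_inj_image_notin_finite \<open>finite bad\<close> by blast
  define eta where "eta = e0 / (real l + 2)"
  have eta: "0 < eta" "eta \<le> e0" using e0 by (auto simp: eta_def field_simps)
  have small: "\<bar>eta * g S\<bar> < \<bar>b S\<bar>" if S: "S \<in> walls r n" for S
  proof -
    have bS: "\<bar>b S\<bar> > 0" using b S by simp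
    have "\<bar>g S\<bar> / \<bar>b S\<bar> \<le> M"
      unfolding M_def using S finite_walls by (intro member_le_sum) auto
    then have "\<bar>g S\<bar> / \<bar>b S\<bar> < 1 + M" by linarith
    then have "e0 * (\<bar>g S\<bar> / \<bar>b S\<bar>) < e0 * (1 + M)" using e0 by (rule mult_strict_left_mono)
    also have "e0 * (1 + M) = 1" using \<open>M \<ge> 0\<close> by (simp add: e0_def)
    finally have "e0 * (\<bar>g S\<bar> / \<bar>b S\<bar>) < 1" .
    moreover have "eta * (\<bar>g S\<bar> / \<bar>b S\<bar>) \<le> e0 * (\<bar>g S\<bar> / \<bar>b S\<bar>)"
      using eta by (intro mult_right_mono) auto
    ultimately have "eta * (\<bar>g S\<bar> / \<bar>b S\<bar>) < 1" by linarith
    then show ?thesis using bS eta by (simp add: abs_mult field_simps)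
  qed
  define y' where "y' = (\<lambda>k. y k + eta * w k)"
  have Qy': "wall_form r S y' = b S + eta * g S" for S
    unfolding y'_def b_def g_def using wall_form_linear[of r S 1 y eta w] by simp
  have sgn_y': "sgn (wall_form r S y') = sgn (b S)" "wall_form r S y' \<noteq> 0" if "S \<in> walls r n" for S
    using small[OF that] unfolding Qy' by (auto simp: sgn_if abs_if split: if_splits)
  have "inj_on (crossing_time r x y') (separating_walls r n x y')"
  proof (rule inj_onI, rule ccontr)
    fix S S' assume S: "S \<in> separating_walls r n x y'" "S' \<in> separating_walls r n x y'"
      and eq: "crossing_time r x y' S = crossing_time r x y' S'" and ne: "S \<noteq> S'"
    have walls: "S \<in> walls r n" "S' \<in> walls r n" using S by (auto simp: separating_walls_def)
    have "a S - (b S + eta * g S) \<noteq> 0" "a S' - (b S' + eta * g S') \<noteq> 0"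
      using S sgn_y' walls a by (auto simp: separating_walls_def a_def Qy' simp del: sgn_0)
    moreover have "a S / (a S - (b S + eta * g S)) = a S' / (a S' - (b S' + eta * g S'))"
      using eq by (simp add: crossing_time_def a_def Qy')
    ultimately have "a S * (a S' - (b S' + eta * g S')) = a S' * (a S - (b S + eta * g S))"
      by (simp add: frac_eq_eq)
    then have "eta * (a S * g S' - a S' * g S) = - (a S * b S' - a S' * b S)"
      by (simp add: algebra_simps)
    moreover have "a S * g S' - a S' * g S \<noteq> 0" using w walls ne by (simp add: g_def)
    ultimately have "eta = - (a S * b S' - a S' * b S) / (a S * g S' - a S' * g S)"
      by (simp add: eq_divide_eq)
    then have "eta \<in> bad" using walls unfolding bad_def by blast
    then show False using l by (simp add: eta_def)
  qed
  moreover have "generic r n y'" "same_chamber r n y' y"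
    using sgn_y' by (auto simp: generic_def same_chamber_def b_def)
  moreover have "y' 1 > 0" using py eta w1 by (simp add: y'_def add_pos_pos)
  ultimately show ?thesis using that by blast
qed

lemma chamber_walk:
  assumes n: "2 \<le> n" and "generic r n x" "generic r n y" "x 1 > 0" "y 1 > 0"
  obtains xs where "xs \<noteq> []" "hd xs = x" "same_chamber r n (last xs) y"
    "successively (adjacent r n) xs" "\<forall>z\<in>set xs. generic r n z \<and> z 1 > 0"
proof -
  obtain y' where y': "generic r n y'" "y' 1 > 0" "same_chamber r n y' y"
    "inj_on (crossing_time r x y') (separating_walls r n x y')"
    using perturb_distinct_crossing_times[OF n assms(2,3,5)] .
  obtain xs where "xs \<noteq> []" "hd xs = x" "same_chamber r n (last xs) y'"
    "successively (adjacent r n) xs" "\<forall>z\<in>set xs. generic r n z \<and> z 1 > 0"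
    using chamber_walk_distinct_times[OF assms(2) y'(1) assms(4) y'(2,4)] .
  moreover from this(3) have "same_chamber r n (last xs) y"
    using y'(3) by (simp add: same_chamber_def)
  ultimately show ?thesis using that by blast
qed

section \<open>A wall crossing of each type\<close>

lemma ex_small_scalar:
  fixes c d :: "'a \<Rightarrow> real"
  assumes I: "finite I" and d: "\<forall>i\<in>I. d i \<noteq> 0"
  obtains \<delta> where "\<delta> > 0" "\<And>e i. 0 < e \<Longrightarrow> e \<le> \<delta> \<Longrightarrow> i \<in> I \<Longrightarrow> \<bar>e * c i\<bar> < \<bar>d i\<bar>"
proof -
  define M where "M = (\<Sum>i\<in>I. \<bar>c i\<bar> / \<bar>d i\<bar>)"
  have M: "M \<ge> 0" by (simp add: M_def sum_nonneg)
  define \<delta> where "\<delta> = 1 / (1 + M)"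
  have "\<bar>e * c i\<bar> < \<bar>d i\<bar>" if e: "0 < e" "e \<le> \<delta>" and i: "i \<in> I" for e i
  proof -
    have "\<bar>c i\<bar> / \<bar>d i\<bar> \<le> M" unfolding M_def using I i by (intro member_le_sum) auto
    then have "e * (\<bar>c i\<bar> / \<bar>d i\<bar>) \<le> \<delta> * M" using e M by (intro mult_mono) auto
    also have "\<delta> * M < 1" using M by (simp add: \<delta>_def)
    finally have "e * \<bar>c i\<bar> < \<bar>d i\<bar>" using d i by (simp add: field_simps)
    then show ?thesis using e by (simp add: abs_mult)
  qed
  moreover have "\<delta> > 0" using M by (simp add: \<delta>_def)
  ultimately show ?thesis using that by blast
qed

lemma ex_common_nonroot:
  fixes c :: "'a \<Rightarrow> nat \<Rightarrow> real" and f :: "nat \<Rightarrow> real"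
  assumes "finite P" "\<forall>p\<in>P. \<exists>i\<le>N. c p i \<noteq> 0" "inj f"
  obtains l where "\<forall>p\<in>P. (\<Sum>i\<le>N. c p i * f l ^ i) \<noteq> 0"
proof -
  have "finite (\<Union>p\<in>P. {z. (\<Sum>i\<le>N. c p i * z ^ i) = 0})"
    using assms(1,2) polyfun_finite_roots by blast
  then obtain l where "f l \<notin> (\<Union>p\<in>P. {z. (\<Sum>i\<le>N. c p i * z ^ i) = 0})"
    using ex_inj_image_notin_finite[OF assms(3)] by blast
  then show ?thesis using that by blast
qed

lemma sum_pow_as_polyfun:
  fixes g :: "nat \<Rightarrow> real"
  assumes "finite A" "A \<subseteq> {..N}"
  shows "(\<Sum>i\<in>A. g i * z ^ i) = (\<Sum>i\<le>N. (if i \<in> A then g i else 0) * z ^ i)"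
proof -
  have "(\<Sum>i\<le>N. (if i \<in> A then g i else 0) * z ^ i) = (\<Sum>i\<in>A. (if i \<in> A then g i else 0) * z ^ i)"
    using assms by (intro sum.mono_neutral_right) auto
  then show ?thesis by simp
qed

lemma sum_signed_powers_pos:
  fixes sg :: "nat \<Rightarrow> real" and eta :: real
  assumes A: "finite A" "1 \<in> A" "\<forall>i\<in>A. 1 \<le> i" and sg: "sg 1 = 1" "\<forall>i. \<bar>sg i\<bar> \<le> 1"
    and eta: "0 < eta" "eta * card A < 1"
  shows "(\<Sum>i\<in>A. sg i * eta ^ i) > 0"
proof -
  have "card A \<ge> 1" using A(1,2) card_gt_0_iff[of A] by auto
  then have "real (card A) \<ge> 1" by simp
  then have "eta * 1 \<le> eta * real (card A)" using eta(1) by (intro mult_left_mono) auto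
  then have eta1: "eta \<le> 1" using eta(2) by linarith
  have "- (eta ^ 2) \<le> sg i * eta ^ i" if "i \<in> A - {1}" for i
  proof -
    have "2 \<le> i" using that A by fastforce
    then have "eta ^ i \<le> eta ^ 2" using eta eta1 by (simp add: power_decreasing)
    moreover have "-1 \<le> sg i" using sg(2)[rule_format, of i] by (simp add: abs_le_iff)
    then have "(-1) * eta ^ i \<le> sg i * eta ^ i" using eta by (intro mult_right_mono) auto
    ultimately show ?thesis by simp
  qed
  then have "(\<Sum>i\<in>A - {1}. sg i * eta ^ i) \<ge> - (real (card A - 1) * eta ^ 2)"
    using sum_mono[of "A - {1}" "\<lambda>_. - (eta ^ 2)"] A by (simp add: card_Diff_singleton)
  moreover have "(\<Sum>i\<in>A. sg i * eta ^ i) = eta + (\<Sum>i\<in>A - {1}. sg i * eta ^ i)"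
    using sum.remove[OF A(1,2), of "\<lambda>i. sg i * eta ^ i"] sg(1) by simp
  moreover have "real (card A - 1) * eta ^ 2 < eta"
  proof -
    have "real (card A - 1) * eta \<le> real (card A) * eta" using eta by (intro mult_right_mono) auto
    moreover have "real (card A) * eta < 1" using eta(2) by (simp add: mult.commute)
    ultimately have "real (card A - 1) * eta < 1" by linarith
    then have "real (card A - 1) * eta * eta < eta" using eta by simp
    then show ?thesis by (simp add: power2_eq_square mult.assoc)
  qed
  ultimately show ?thesis by linarith
qed

text \<open>With coefficients sg i * eta ^ i every other wall form is a nonzero polynomial in eta.\<close>
lemma ex_wall_point_off_other_walls:
  assumes S0: "S0 \<in> walls r n" and one: "1 \<in> S0" and sg: "\<forall>i. sg i = 1 \<or> sg i = -1" "sg 1 = 1"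
  obtains cf where "\<forall>i. sgn (cf i) = sg i" "(\<Sum>i\<in>S0. cf i) > 0"
    "\<forall>S\<in>walls r n. S \<noteq> S0 \<longrightarrow> (\<Sum>i\<in>S0. cf i * wall_form r S (moment i)) \<noteq> 0"
proof -
  note S0_facts = walls_memD[OF S0]
  define c where "c = (\<lambda>S i. if i \<in> S0 then sg i * wall_form r S (moment i) else 0)"
  have coeff: "\<exists>i\<le>n. c S i \<noteq> 0" if S: "S \<in> walls r n - {S0}" for S
  proof -
    have S_facts: "finite S" "card S + 1 = r" using walls_memD[of S] S by auto
    have "\<not> S0 \<subseteq> S"
    proof
      assume "S0 \<subseteq> S"
      then have "S0 = S" using card_subset_eq[OF S_facts(1)] S_facts(2) S0_facts(2) by simp
      then show False using S by simp
    qed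
    then obtain i where i: "i \<in> S0" "i \<notin> S" by blast
    then have "c S i \<noteq> 0" "i \<le> n"
      using sg(1)[rule_format, of i] S_facts S0_facts(3) by (auto simp: c_def wall_form_moment_eq_0_iff)
    then show ?thesis by blast
  qed
  define e0 where "e0 = 1 / (real (card S0) + 1)"
  have e0: "e0 > 0" by (simp add: e0_def)
  have "inj (\<lambda>l::nat. e0 / (real l + 1))" using e0 by (auto simp: inj_on_def field_simps)
  then obtain l where l: "\<forall>S\<in>walls r n - {S0}. (\<Sum>i\<le>n. c S i * (e0 / (real l + 1)) ^ i) \<noteq> 0"
    using ex_common_nonroot[of "walls r n - {S0}" n c] finite_walls coeff by blast
  define eta where "eta = e0 / (real l + 1)"
  have eta: "0 < eta" "eta \<le> e0" using e0 by (auto simp: eta_def field_simps)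
  define cf where "cf = (\<lambda>i. sg i * eta ^ i)"
  have "sgn (cf i) = sg i" for i using sg(1)[rule_format, of i] eta by (auto simp: cf_def sgn_mult)
  moreover have "(\<Sum>i\<in>S0. cf i) > 0"
  proof -
    have "eta * card S0 \<le> e0 * card S0" using eta by (intro mult_right_mono) auto
    also have "\<dots> < 1" by (simp add: e0_def)
    finally have small: "eta * card S0 < 1" .
    have ge1: "\<forall>i\<in>S0. 1 \<le> i" using S0_facts(3) by auto
    have bounded: "\<forall>i. \<bar>sg i\<bar> \<le> 1" using sg(1) by (metis abs_1 abs_minus_cancel order_refl)
    show ?thesis
      unfolding cf_def by (rule sum_signed_powers_pos[OF S0_facts(1) one ge1 sg(2) bounded eta(1) small])
  qed
  moreover have "(\<Sum>i\<in>S0. cf i * wall_form r S (moment i)) \<noteq> 0" if "S \<in> walls r n" "S \<noteq> S0" for S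
  proof -
    have "(\<Sum>i\<in>S0. cf i * wall_form r S (moment i)) = (\<Sum>i\<in>S0. (sg i * wall_form r S (moment i)) * eta ^ i)"
      by (simp add: cf_def algebra_simps)
    also have "\<dots> = (\<Sum>i\<le>n. c S i * eta ^ i)"
      unfolding c_def using S0_facts(1,3) by (intro sum_pow_as_polyfun) auto
    finally show ?thesis using l that by (simp add: eta_def)
  qed
  ultimately show ?thesis using that by blast
qed

lemma sgn_add_small:
  fixes a e :: real
  assumes "\<bar>e\<bar> < \<bar>a\<bar>"
  shows "sgn (a + e) = sgn a" "a + e \<noteq> 0"
  using assms by (auto simp: sgn_if abs_if split: if_splits)

lemma wall_crossing_through_wall_point:
  assumes S0: "S0 \<in> walls r n" and P0: "wall_form r S0 P0 = 0"
    "\<forall>S\<in>walls r n. S \<noteq> S0 \<longrightarrow> wall_form r S P0 \<noteq> 0" "P0 1 > 0"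
    and v: "wall_form r S0 v > 0"
  obtains x0 x1 where "wall_crossing r n S0 x0 x1" "x0 1 > 0" "x1 1 > 0"
    "wall_form r S0 x0 < 0" "wall_form r S0 x1 > 0"
    "\<forall>S\<in>walls r n. S \<noteq> S0 \<longrightarrow> sgn (wall_form r S x0) = sgn (wall_form r S P0)"
proof -
  obtain \<delta>1 where \<delta>1: "\<delta>1 > 0"
    "\<And>e S. 0 < e \<Longrightarrow> e \<le> \<delta>1 \<Longrightarrow> S \<in> walls r n - {S0} \<Longrightarrow>
      \<bar>e * wall_form r S v\<bar> < \<bar>wall_form r S P0\<bar>"
    using ex_small_scalar[of "walls r n - {S0}" "\<lambda>S. wall_form r S P0" "\<lambda>S. wall_form r S v"]
      finite_walls P0(2) by blast
  define \<delta> where "\<delta> = min \<delta>1 (P0 1 / (\<bar>v 1\<bar> + 1))"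
  have \<delta>: "0 < \<delta>" "\<delta> \<le> \<delta>1" using \<delta>1 P0(3) by (auto simp: \<delta>_def)
  have "\<delta> * \<bar>v 1\<bar> < P0 1"
  proof -
    have "\<delta> * \<bar>v 1\<bar> \<le> P0 1 / (\<bar>v 1\<bar> + 1) * \<bar>v 1\<bar>" using \<delta> by (intro mult_right_mono) (auto simp: \<delta>_def)
    also have "\<dots> < P0 1" using P0(3) by (simp add: field_simps)
    finally show ?thesis .
  qed
  then have first: "P0 1 + e * v 1 > 0" if "\<bar>e\<bar> = \<delta>" for e
  proof -
    have "\<bar>e * v 1\<bar> < P0 1" using that \<open>\<delta> * \<bar>v 1\<bar> < P0 1\<close> by (simp add: abs_mult)
    then show ?thesis by (simp add: abs_less_iff)
  qed
  define x where "x = (\<lambda>e k. P0 k + e * v k)"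
  have Qx: "wall_form r S (x e) = wall_form r S P0 + e * wall_form r S v" for S e
    using wall_form_linear[of r S 1 P0 e v] by (simp add: x_def)
  have same: "sgn (wall_form r S (x e)) = sgn (wall_form r S P0)" "wall_form r S (x e) \<noteq> 0"
    if "S \<in> walls r n" "S \<noteq> S0" "\<bar>e\<bar> = \<delta>" for S e
  proof -
    have "\<bar>\<delta> * wall_form r S v\<bar> < \<bar>wall_form r S P0\<bar>" using \<delta>1(2)[of \<delta> S] \<delta> that(1,2) by blast
    then have "\<bar>e * wall_form r S v\<bar> < \<bar>wall_form r S P0\<bar>" using that(3) \<delta> by (simp add: abs_mult)
    then show "sgn (wall_form r S (x e)) = sgn (wall_form r S P0)" "wall_form r S (x e) \<noteq> 0"
      unfolding Qx by (rule sgn_add_small)+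
  qed
  have S0_sgn: "wall_form r S0 (x (- \<delta>)) < 0" "wall_form r S0 (x \<delta>) > 0"
    using P0(1) v \<delta> by (simp_all add: Qx mult_pos_pos)
  have "generic r n (x e)" if "\<bar>e\<bar> = \<delta>" for e
    unfolding generic_def
  proof
    fix S assume S: "S \<in> walls r n"
    show "wall_form r S (x e) \<noteq> 0"
    proof (cases "S = S0")
      case True
      have "e \<noteq> 0" using that \<delta> by auto
      then show ?thesis using True P0(1) v by (simp add: Qx)
    qed (use same(2)[OF S _ that] in blast)
  qed
  then have "wall_crossing r n S0 (x (- \<delta>)) (x \<delta>)"
    unfolding wall_crossing_def using S0 same[of _ "- \<delta>"] same[of _ \<delta>] S0_sgn \<delta> by auto
  moreover have "x (- \<delta>) 1 > 0" "x \<delta> 1 > 0" using first[of "- \<delta>"] first[of \<delta>] \<delta> by (auto simp: x_def)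
  ultimately show ?thesis using that S0_sgn same[of _ "- \<delta>"] \<delta> by auto
qed

lemma ip_first_two:
  "2 \<le> r \<Longrightarrow> ip r y (\<lambda>k. if k = 1 then a else if k = 2 then b else 0) = y 1 * a + y 2 * b"
proof -
  assume "2 \<le> r"
  then have "ip r y (\<lambda>k. if k = 1 then a else if k = 2 then b else 0) =
      (\<Sum>k\<in>{1, 2}. y k * (if k = 1 then a else if k = 2 then b else 0))"
    unfolding ip_def by (intro sum.mono_neutral_right) auto
  then show ?thesis by simp
qed

text \<open>Just beyond the wall S0, the covector of the functional defining S0, tilted by
  eps * (t - th) along the moment curve, separates the columns of S0 at th.\<close>
lemma signvec_beyond_wall:
  assumes r: "2 \<le> r" and S0: "S0 \<in> walls r n" and x: "wall_form r S0 x > 0"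
    and th: "\<forall>i\<in>S0. real i \<noteq> th"
  shows "(\<lambda>i. if i \<in> {1..n} then (if i \<in> S0 then sgn (real i - th) else if i = n then 1
      else sgn (wall_form r S0 (moment i))) else 0) \<in> signvecs r n (moment_config n x)"
proof -
  note S0_facts = walls_memD[OF S0]
  define w where "w = (\<lambda>k::nat. if k = 1 then - th else if k = 2 then 1 else (0::real))"
  define q where "q = coeff_vec (root_poly S0)"
  have ip_w: "ip r (moment i) w = real i - th" for i
    using ip_first_two[OF r] by (simp add: w_def moment_def)
  have d: "\<forall>i\<in>{1..n} - S0. wall_form r S0 (moment_config n x i) \<noteq> 0"
  proof
    fix i assume "i \<in> {1..n} - S0"
    then show "wall_form r S0 (moment_config n x i) \<noteq> 0"
      using x wall_form_moment_eq_0_iff[OF S0_facts(1), of r i] S0_facts(2)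
      by (cases "i = n") (auto simp: moment_config_def)
  qed
  obtain eps where eps_pos: "eps > 0" and eps_small: "\<And>e i. 0 < e \<Longrightarrow> e \<le> eps \<Longrightarrow>
      i \<in> {1..n} - S0 \<Longrightarrow> \<bar>e * ip r (moment_config n x i) w\<bar> < \<bar>wall_form r S0 (moment_config n x i)\<bar>"
    using ex_small_scalar[OF finite_Diff[OF finite_atLeastAtMost] d,
        of "\<lambda>i. ip r (moment_config n x i) w"] by blast
  have eps: "eps > 0" "\<And>i. i \<in> {1..n} - S0 \<Longrightarrow>
      \<bar>eps * ip r (moment_config n x i) w\<bar> < \<bar>wall_form r S0 (moment_config n x i)\<bar>"
    using eps_pos eps_small[OF eps_pos order_refl] by auto
  define u where "u = (\<lambda>k. q k + eps * w k)"
  have ip_u: "ip r z u = wall_form r S0 z + eps * ip r z w" for z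
    using ip_linear_right[of r z 1 q eps w] by (simp add: u_def wall_form_def q_def)
  have sgn_u: "sgn (ip r (moment_config n x i) u) = (if i \<in> S0 then sgn (real i - th)
      else if i = n then 1 else sgn (wall_form r S0 (moment i)))" if i: "i \<in> {1..n}" for i
  proof (cases "i \<in> S0")
    case True
    then have "wall_form r S0 (moment i) = 0" "i \<noteq> n"
      using S0_facts wall_form_moment_eq_0_iff[OF S0_facts(1), of r i] by auto
    then have "ip r (moment_config n x i) u = eps * (real i - th)"
      by (simp add: ip_u ip_w moment_config_def)
    then show ?thesis using True eps(1) by (simp add: sgn_mult)
  next
    case False
    then have "\<bar>eps * ip r (moment_config n x i) w\<bar> < \<bar>wall_form r S0 (moment_config n x i)\<bar>"
      using eps(2) i by blast
    then have "sgn (ip r (moment_config n x i) u) = sgn (wall_form r S0 (moment_config n x i))"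
      unfolding ip_u by (rule sgn_add_small(1))
    then show ?thesis using False x by (cases "i = n") (simp_all add: moment_config_def)
  qed
  have "S0 \<noteq> {}" using S0_facts(2) r by auto
  then obtain i0 where i0: "i0 \<in> S0" by blast
  then have "i0 \<in> {1..n}" using S0_facts(3) by blast
  then have "sgn (ip r (moment_config n x i0) u) = sgn (real i0 - th)" using sgn_u i0 by simp
  moreover have "real i0 - th \<noteq> 0" using th i0 by simp
  ultimately have ip_i0: "ip r (moment_config n x i0) u \<noteq> 0" by (auto simp: sgn_0_0)
  have nz: "nonzero_vec r u"
  proof (rule ccontr)
    assume "\<not> nonzero_vec r u"
    then have "\<forall>k\<in>{1..r}. u k = 0" by (simp add: nonzero_vec_def)
    then have "ip r (moment_config n x i0) u = 0" by (simp add: ip_def)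
    then show False using ip_i0 by simp
  qed
  have eq: "(\<lambda>i. if i \<in> {1..n} then (if i \<in> S0 then sgn (real i - th) else if i = n then 1
      else sgn (wall_form r S0 (moment i))) else 0) =
      (\<lambda>i. if i \<in> {1..n} then sgn (ip r (moment_config n x i) u) else 0)"
    using sgn_u by (intro ext) simp
  show ?thesis
    unfolding signvecs_def mem_Collect_eq eq using nz by blast
qed

lemma lin_relation_moment_config_cramer:
  assumes T: "finite T" "card T = r" "n \<notin> T"
  obtains mu where "lin_relation r (moment_config n x) (insert n T) mu" "mu n = 1"
    "\<forall>l\<in>T. wall_form r (T - {l}) x = - mu l * wall_form r (T - {l}) (moment l)"
proof -
  obtain b where b: "\<forall>k\<in>{1..r}. x k = (\<Sum>l\<in>T. b l * moment l k)"
    using moment_spanning[OF T(1,2)] by blast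
  define mu where "mu = (\<lambda>i. if i = n then 1 else - 1 * b i)"
  have "lin_relation r (moment_config n x) (insert n T) mu"
    unfolding mu_def by (rule lin_relation_moment_config_rep[OF T(1,3) b])
  moreover have "wall_form r (T - {l}) x = - mu l * wall_form r (T - {l}) (moment l)" if "l \<in> T" for l
    using wall_form_moment_basis[OF T(1,2) that b] that T(3) by (auto simp: mu_def)
  ultimately show ?thesis using that by (simp add: mu_def)
qed

text \<open>Near a point P0 of the wall S0 off all other walls, on the negative side of S0, the
  circuit through the moving column and S0 \<union> {j} has the signs read off by Cramer's rule:
  on S0 those of minus the coefficients of P0, at j the sign of the wall form of S0.\<close>
lemma wall_circuit_signs_near_wall_point:
  assumes S0: "S0 \<in> walls r n" and P0: "\<forall>k\<in>{1..r}. P0 k = (\<Sum>l\<in>S0. cf l * moment l k)"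
    and x0: "wall_form r S0 x0 < 0"
      "\<forall>S\<in>walls r n. S \<noteq> S0 \<longrightarrow> sgn (wall_form r S x0) = sgn (wall_form r S P0)"
    and Y: "Y n = 1" "\<forall>l\<in>S0. Y l = - sgn (cf l)"
      "\<forall>j\<in>{1..n - 1} - S0. Y j = sgn (wall_form r S0 (moment j))"
  shows "wall_circuit_signs r n S0 x0 Y"
  unfolding wall_circuit_signs_def
proof
  fix j assume j: "j \<in> {1..n - 1} - S0"
  note S0_facts = walls_memD[OF S0]
  have "S0 \<subseteq> {1..n - 1}" using S0 by (simp add: walls_def)
  define T where "T = insert j S0"
  have T: "finite T" "card T = r" "n \<notin> T" "T \<subseteq> {1..n - 1}" "insert n T = insert j (insert n S0)"
    using S0_facts \<open>S0 \<subseteq> {1..n - 1}\<close> j by (auto simp: T_def)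
  obtain mu where rel: "lin_relation r (moment_config n x0) (insert n T) mu" and "mu n = 1"
    and cramer: "\<forall>l\<in>T. wall_form r (T - {l}) x0 = - mu l * wall_form r (T - {l}) (moment l)"
    using lin_relation_moment_config_cramer[OF T(1-3)] by blast
  have "sgn (mu l) = Y l" if l: "l \<in> insert n T" for l
  proof -
    consider "l = n" | "l = j" | "l \<in> S0" using l by (auto simp: T_def)
    then show ?thesis
    proof cases
      case 1 then show ?thesis using \<open>mu n = 1\<close> Y(1) by simp
    next
      case 2
      then have "T - {l} = S0" using j by (auto simp: T_def)
      then have "wall_form r S0 x0 = - mu j * wall_form r S0 (moment j)"
        using cramer 2 by (auto simp: T_def)
      then have "mu j * wall_form r S0 (moment j) > 0" using x0(1) by simp
      then have "sgn (mu j) * sgn (wall_form r S0 (moment j)) = 1" by (simp add: sgn_mult[symmetric])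
      then show ?thesis using Y(3) j 2 by (auto simp: sgn_if split: if_splits)
    next
      case 3
      define W where "W = T - {l}"
      have W: "W \<in> walls r n" "W \<noteq> S0" using walls_remove[OF T(4,2)] 3 j by (auto simp: W_def T_def)
      define cf' where "cf' = (\<lambda>i. if i = j then 0 else cf i)"
      have P0': "\<forall>k\<in>{1..r}. P0 k = (\<Sum>i\<in>T. cf' i * moment i k)"
        using P0 j T(1) by (simp add: T_def cf'_def) (intro ballI sum.cong, auto)
      have "l \<in> T" "cf' l = cf l" using 3 j by (auto simp: T_def cf'_def)
      then have "wall_form r W P0 = cf l * wall_form r W (moment l)"
        using wall_form_moment_basis[OF T(1,2) \<open>l \<in> T\<close> P0'] by (simp add: W_def)
      moreover have "wall_form r W x0 = - mu l * wall_form r W (moment l)"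
        using cramer 3 by (simp add: W_def T_def)
      moreover have "sgn (wall_form r W x0) = sgn (wall_form r W P0)" using x0(2) W by blast
      moreover have "wall_form r W (moment l) \<noteq> 0"
        using wall_form_moment_eq_0_iff[of W r l] walls_memD(1,2)[OF W(1)] by (simp add: W_def)
      ultimately have "(- sgn (mu l)) * sgn (wall_form r W (moment l)) =
          sgn (cf l) * sgn (wall_form r W (moment l))" "sgn (wall_form r W (moment l)) \<noteq> 0"
        by (simp_all add: sgn_mult sgn_minus sgn_0_0)
      then have "sgn (mu l) = - sgn (cf l)" by (metis mult_cancel_right minus_minus)
      then show ?thesis using Y(2) 3 by simp
    qed
  qed
  then show "\<exists>mu. lin_relation r (moment_config n x0) (insert j (insert n S0)) mu \<and>
      (\<forall>i\<in>insert j (insert n S0). sgn (mu i) = Y i)"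
    using rel T(5) by auto
qed

definition witness_wall :: "nat \<Rightarrow> nat \<Rightarrow> nat set" where
  "witness_wall r k = insert (k + r - 1) {1..r - 2}"

definition witness_signs :: "nat \<Rightarrow> nat \<Rightarrow> nat \<Rightarrow> nat \<Rightarrow> nat \<Rightarrow> real" where
  "witness_signs r n j k i =
     (if i \<in> {1..n} then (if i \<le> j \<or> (r - 1 \<le> i \<and> i < k + r - 1) then -1 else 1) else 0)"

lemma witness_wall_mem_walls:
  assumes "3 \<le> r" "k + r + 1 \<le> n"
  shows "witness_wall r k \<in> walls r n"
proof -
  have "k + r - 1 \<notin> {1..r - 2}" using assms by auto
  then have "card (witness_wall r k) + 1 = r" using assms(1) by (simp add: witness_wall_def)
  moreover have "witness_wall r k \<subseteq> {1..n - 1}" using assms by (auto simp: witness_wall_def)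
  ultimately show ?thesis by (simp add: walls_def)
qed

lemma sgn_wall_form_witness_moment:
  assumes r: "3 \<le> r" and i: "r - 1 \<le> i" "i \<noteq> k + r - 1"
  shows "sgn (wall_form r (witness_wall r k) (moment i)) = (if i < k + r - 1 then -1 else 1)"
proof -
  have "k + r - 1 \<notin> {1..r - 2}" using r by auto
  then have "wall_form r (witness_wall r k) (moment i) =
      (real i - real (k + r - 1)) * (\<Prod>s\<in>{1..r - 2}. real i - real s)"
    using r by (simp add: witness_wall_def wall_form_moment)
  moreover have "(\<Prod>s\<in>{1..r - 2}. real i - real s) > 0" using i by (intro prod_pos) auto
  ultimately show ?thesis using i by (simp add: sgn_mult)
qed

lemma witness_signs_pm_vecs: "witness_signs r n j k \<in> pm_vecs n"
  by (simp add: witness_signs_def pm_vecs_def)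

lemma witness_signs_neg_set:
  "{i\<in>{1..n}. witness_signs r n j k i = -1} = {i\<in>{1..n}. i \<le> j \<or> (r - 1 \<le> i \<and> i < k + r - 1)}"
  by (auto simp: witness_signs_def)

lemma witness_signs_counts:
  assumes r: "3 \<le> r" and j: "j \<le> r - 2" and k: "k + r + 1 \<le> n"
  defines "Ym \<equiv> {i\<in>{1..n}. witness_signs r n j k i = -1}"
  shows "card (insert n (witness_wall r k) \<inter> Ym) = j"
    and "card (Ym - insert n (witness_wall r k)) = k"
proof -
  have Ym: "Ym = {i\<in>{1..n}. i \<le> j \<or> (r - 1 \<le> i \<and> i < k + r - 1)}"
    unfolding Ym_def by (rule witness_signs_neg_set)
  have "insert n (witness_wall r k) \<inter> Ym = {1..j}"
    using r j k by (auto simp: Ym witness_wall_def)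
  then show "card (insert n (witness_wall r k) \<inter> Ym) = j" by simp
  have "Ym - insert n (witness_wall r k) = {r - 1..<k + r - 1}"
    using r j k by (auto simp: Ym witness_wall_def)
  then show "card (Ym - insert n (witness_wall r k)) = k" using r by simp
qed

lemma witness_crossing:
  assumes r: "3 \<le> r" and j: "1 \<le> j" "j \<le> r - 2" and k: "k + r + 1 \<le> n"
  obtains x0 x1 where "wall_crossing r n (witness_wall r k) x0 x1" "x0 1 > 0" "x1 1 > 0"
    "witness_signs r n j k \<in> signvecs r n (moment_config n x1)"
    "wall_circuit_signs r n (witness_wall r k) x0 (witness_signs r n j k)"
proof -
  let ?S0 = "witness_wall r k" and ?Y = "witness_signs r n j k" and ?p = "k + r - 1"
  have S0: "?S0 \<in> walls r n" by (rule witness_wall_mem_walls[OF r k])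
  note S0_facts = walls_memD[OF S0]
  have "(1::nat) \<le> r - 2" using r by linarith
  then have "1 \<in> ?S0" by (simp add: witness_wall_def)
  define sg where "sg = (\<lambda>i::nat. if i \<le> j then 1 else - 1 :: real)"
  have sg: "\<forall>i. sg i = 1 \<or> sg i = -1" "sg 1 = 1" using j by (auto simp: sg_def)
  obtain cf where cf: "\<forall>i. sgn (cf i) = sg i" "(\<Sum>i\<in>?S0. cf i) > 0"
    "\<forall>S\<in>walls r n. S \<noteq> ?S0 \<longrightarrow> (\<Sum>i\<in>?S0. cf i * wall_form r S (moment i)) \<noteq> 0"
    using ex_wall_point_off_other_walls[OF S0 \<open>1 \<in> ?S0\<close> sg] by blast
  define P0 where "P0 = (\<lambda>k. \<Sum>l\<in>?S0. cf l * moment l k)"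
  have Q_P0: "wall_form r S P0 = (\<Sum>l\<in>?S0. cf l * wall_form r S (moment l))" for S
    by (rule wall_form_lin_comb) (simp add: P0_def)
  have "wall_form r ?S0 P0 = 0"
    unfolding Q_P0 using S0_facts wall_form_moment_eq_0_iff[of ?S0 r] by (intro sum.neutral) simp
  moreover have "\<forall>S\<in>walls r n. S \<noteq> ?S0 \<longrightarrow> wall_form r S P0 \<noteq> 0" using cf(3) by (simp add: Q_P0)
  moreover have "P0 1 > 0" using cf(2) by (simp add: P0_def moment_def)
  ultimately have P0: "wall_form r ?S0 P0 = 0" "\<forall>S\<in>walls r n. S \<noteq> ?S0 \<longrightarrow> wall_form r S P0 \<noteq> 0"
    "P0 1 > 0" by blast+
  have "r - 1 \<le> n - 1" using k by linarith
  moreover have "n - 1 \<noteq> ?p" using k r by linarith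
  moreover have "\<not> n - 1 < ?p" using k r by linarith
  ultimately have "sgn (wall_form r ?S0 (moment (n - 1))) = 1"
    using sgn_wall_form_witness_moment[OF r, of "n - 1" k] by simp
  then have "wall_form r ?S0 (moment (n - 1)) > 0" by (simp add: sgn_1_pos)
  then obtain x0 x1 where x: "wall_crossing r n ?S0 x0 x1" "x0 1 > 0" "x1 1 > 0"
    "wall_form r ?S0 x0 < 0" "wall_form r ?S0 x1 > 0"
    "\<forall>S\<in>walls r n. S \<noteq> ?S0 \<longrightarrow> sgn (wall_form r S x0) = sgn (wall_form r S P0)"
    using wall_crossing_through_wall_point[OF S0 P0] by blast
  have "?S0 \<subseteq> {1..r - 2} \<union> {?p}" by (auto simp: witness_wall_def)
  have th: "\<forall>i\<in>?S0. real i \<noteq> real j + 1 / 2"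
  proof
    fix i show "real i \<noteq> real j + 1 / 2"
    proof
      assume "real i = real j + 1 / 2"
      then have "2 * real i = 2 * real j + 1" by simp
      then have "2 * i = 2 * j + 1" by linarith
      then show False by presburger
    qed
  qed
  have "(\<lambda>i. if i \<in> {1..n} then (if i \<in> ?S0 then sgn (real i - (real j + 1 / 2)) else if i = n then 1
      else sgn (wall_form r ?S0 (moment i))) else 0) = ?Y"
  proof
    fix i
    show "(if i \<in> {1..n} then (if i \<in> ?S0 then sgn (real i - (real j + 1 / 2)) else if i = n then 1
      else sgn (wall_form r ?S0 (moment i))) else 0) = ?Y i"
    proof (cases "i \<in> {1..n}")
      case True
      consider "i \<in> ?S0" | "i = n" | "i \<notin> ?S0" "i \<noteq> n" by blast
      then show ?thesis
      proof cases
        case 1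
        then have "i \<le> r - 2 \<or> i = ?p" by (auto simp: witness_wall_def)
        then show ?thesis using True 1 j r by (auto simp: witness_signs_def sgn_if)
      next
        case 2 then show ?thesis using True S0_facts(4) k j r by (auto simp: witness_signs_def)
      next
        case 3
        then have "r - 1 \<le> i" "i \<noteq> ?p" using True by (auto simp: witness_wall_def)
        then show ?thesis
          using True 3 j sgn_wall_form_witness_moment[OF r, of i k] by (auto simp: witness_signs_def)
      qed
    qed (auto simp: witness_signs_def)
  qed
  then have "?Y \<in> signvecs r n (moment_config n x1)"
    using signvec_beyond_wall[OF _ S0 x(5) th] r by simp
  moreover have "wall_circuit_signs r n ?S0 x0 ?Y"
  proof (rule wall_circuit_signs_near_wall_point[OF S0 _ x(4,6)])
    show "\<forall>k\<in>{1..r}. P0 k = (\<Sum>l\<in>?S0. cf l * moment l k)" by (simp add: P0_def)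
    show "?Y n = 1" using S0_facts(4) k j r by (auto simp: witness_signs_def)
    show "\<forall>l\<in>?S0. ?Y l = - sgn (cf l)"
      using cf(1) S0_facts(3) j r by (auto simp: witness_signs_def sg_def witness_wall_def)
    show "\<forall>i\<in>{1..n - 1} - ?S0. ?Y i = sgn (wall_form r ?S0 (moment i))"
      using sgn_wall_form_witness_moment[OF r] j r by (auto simp: witness_signs_def witness_wall_def)
  qed
  ultimately show ?thesis using that x(1-3) by blast
qed

lemma wall_crossing_same_chamber:
  assumes "wall_crossing r n S0 x z" "generic r n y" "same_chamber r n y x"
  shows "wall_crossing r n S0 y z"
  using assms unfolding wall_crossing_def same_chamber_def by metis

lemma wall_circuit_signs_same_chamber:
  assumes gx: "generic r n x" and same: "same_chamber r n x y" and S0: "S0 \<in> walls r n"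
    and Y: "Y \<in> pm_vecs n" and circ: "wall_circuit_signs r n S0 x Y"
  shows "wall_circuit_signs r n S0 y Y"
  unfolding wall_circuit_signs_def
proof
  fix j assume j: "j \<in> {1..n - 1} - S0"
  note S0_facts = walls_memD[OF S0]
  have "S0 \<subseteq> {1..n - 1}" using S0 by (simp add: walls_def)
  define T where "T = insert j S0"
  have T: "finite T" "card T = r" "n \<notin> T" "T \<subseteq> {1..n - 1}" "insert n T = insert j (insert n S0)"
    using S0_facts \<open>S0 \<subseteq> {1..n - 1}\<close> j by (auto simp: T_def)
  have walls: "T - {i} \<in> walls r n" if "i \<in> T" for i using walls_remove[OF T(4,2) that] .
  obtain mu where rel: "lin_relation r (moment_config n x) (insert n T) mu"
    and sgns: "\<forall>i\<in>insert n T. sgn (mu i) = Y i"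
    using circ j T(5) unfolding wall_circuit_signs_def by metis
  have "n \<in> {1..n}" using j by auto
  then have "mu n \<noteq> 0" using sgns pm_vecs_memD(3)[OF Y] by fastforce
  moreover have "\<forall>i\<in>T. wall_form r (T - {i}) x \<noteq> 0" using gx walls by (auto simp: generic_def)
  ultimately obtain mu' where rel': "lin_relation r (moment_config n y) (insert n T) mu'"
    and "mu' n = mu n"
    and sgn': "\<forall>i\<in>T. sgn (mu' i) = sgn (wall_form r (T - {i}) x) * sgn (wall_form r (T - {i}) y) * sgn (mu i)"
    using transfer_signed_relation[OF T(1-3) rel] by metis
  have "sgn (mu' i) = Y i" if "i \<in> insert n T" for i
  proof (cases "i = n")
    case True then show ?thesis using \<open>mu' n = mu n\<close> sgns by simp
  next
    case False
    then have "i \<in> T" using that by simp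
    then have "sgn (wall_form r (T - {i}) x) = sgn (wall_form r (T - {i}) y)"
      using same walls by (simp add: same_chamber_def)
    then have "sgn (mu' i) = sgn (mu i)"
      using sgn'[rule_format, OF \<open>i \<in> T\<close>] sgn_wall_form_sq[OF gx walls[OF \<open>i \<in> T\<close>]] by simp
    then show ?thesis using sgns \<open>i \<in> T\<close> by simp
  qed
  then show "\<exists>mu. lin_relation r (moment_config n y) (insert j (insert n S0)) mu \<and>
      (\<forall>i\<in>insert j (insert n S0). sgn (mu i) = Y i)"
    using rel' T(5) by auto
qed

lemma mutation_of_type_of_wall_crossing:
  assumes r: "1 \<le> r" and n: "r + 1 \<le> n" and wc: "wall_crossing r n S0 y x"
    and Y: "Y \<in> pm_vecs n" "Y \<in> signvecs r n (moment_config n x)"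
    and circ: "wall_circuit_signs r n S0 y Y"
  shows "mutation_of_type r n (moment_config n y) (moment_config n x)
    (card (insert n S0 \<inter> {i\<in>{1..n}. Y i = -1})) (card ({i\<in>{1..n}. Y i = -1} - insert n S0))"
  unfolding mutation_of_type_def Let_def
  using mutation_path_of_wall_crossing[OF r n wc] new_signvecs_of_wall_crossing[OF r n wc Y circ] Y(1)
  by blast

lemma chamber_pair_of_type:
  assumes r: "3 \<le> r" and j: "1 \<le> j" "j \<le> r - 2" and k: "k + r + 1 \<le> n"
  obtains x0 x1 where "generic r n x0" "x0 1 > 0" "generic r n x1" "x1 1 > 0"
    "\<And>y. generic r n y \<Longrightarrow> same_chamber r n y x0 \<Longrightarrow>
      adjacent r n y x1 \<and> mutation_of_type r n (moment_config n y) (moment_config n x1) j k"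
proof -
  obtain x0 x1 where x: "wall_crossing r n (witness_wall r k) x0 x1" "x0 1 > 0" "x1 1 > 0"
    and Y: "witness_signs r n j k \<in> signvecs r n (moment_config n x1)"
    and circ: "wall_circuit_signs r n (witness_wall r k) x0 (witness_signs r n j k)"
    using witness_crossing[OF r j k] by blast
  have gen: "generic r n x0" "generic r n x1" using x(1) by (auto simp: wall_crossing_def)
  have "adjacent r n y x1 \<and> mutation_of_type r n (moment_config n y) (moment_config n x1) j k"
    if y: "generic r n y" "same_chamber r n y x0" for y
  proof
    have wc: "wall_crossing r n (witness_wall r k) y x1"
      by (rule wall_crossing_same_chamber[OF x(1) y])
    then show "adjacent r n y x1" by (auto simp: adjacent_def)
    have "same_chamber r n x0 y" using y(2) by (simp add: same_chamber_def)
    then have "wall_circuit_signs r n (witness_wall r k) y (witness_signs r n j k)"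
      using wall_circuit_signs_same_chamber[OF gen(1) _ _ witness_signs_pm_vecs circ]
        witness_wall_mem_walls[OF r k] by blast
    then show "mutation_of_type r n (moment_config n y) (moment_config n x1) j k"
      using mutation_of_type_of_wall_crossing[OF _ _ wc witness_signs_pm_vecs Y] r k
        witness_signs_counts[OF r j(2) k] by simp
  qed
  then show ?thesis using that gen x(2,3) by blast
qed

definition realises_type :: "nat \<Rightarrow> nat \<Rightarrow> (nat \<Rightarrow> real) list \<Rightarrow> nat \<Rightarrow> nat \<Rightarrow> bool" where
  "realises_type r n xs j k \<longleftrightarrow> (\<exists>l. Suc l < length xs \<and>
     mutation_of_type r n (moment_config n (xs ! l)) (moment_config n (xs ! Suc l)) j k)"

lemma realises_type_append:
  assumes "realises_type r n xs j k" shows "realises_type r n (xs @ ys) j k"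
proof -
  obtain l where l: "Suc l < length xs"
    "mutation_of_type r n (moment_config n (xs ! l)) (moment_config n (xs ! Suc l)) j k"
    using assms by (auto simp: realises_type_def)
  then have "(xs @ ys) ! l = xs ! l" "(xs @ ys) ! Suc l = xs ! Suc l" by (simp_all add: nth_append)
  then show ?thesis using l unfolding realises_type_def by (intro exI[of _ l]) simp
qed

lemma successively_append_tl:
  assumes "successively P xs" "successively P zs" "zs \<noteq> []" "hd zs = last xs"
  shows "successively P (xs @ tl zs)"
proof -
  have "successively P (hd zs # tl zs)" using assms(2,3) by simp
  then have "tl zs = [] \<or> P (hd zs) (hd (tl zs)) \<and> successively P (tl zs)"
    by (simp add: successively_Cons)
  then show ?thesis using assms(1,4) by (auto simp: successively_append_iff)
qed

lemma walk_realising_types: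
  assumes r: "3 \<le> r" and n: "r + 1 \<le> n"
    and E: "finite E" "\<forall>(j, k)\<in>E. 1 \<le> j \<and> j \<le> r - 2 \<and> k + r + 1 \<le> n"
  obtains xs where "xs \<noteq> []" "\<forall>x\<in>set xs. generic r n x \<and> x 1 > 0" "successively (adjacent r n) xs"
    "\<forall>(j, k)\<in>E. realises_type r n xs j k"
proof -
  have "\<exists>xs. xs \<noteq> [] \<and> (\<forall>x\<in>set xs. generic r n x \<and> x 1 > 0) \<and> successively (adjacent r n) xs \<and>
      (\<forall>(j, k)\<in>E. realises_type r n xs j k)"
    using E
  proof (induction E rule: finite_induct)
    case empty
    have "moment n 1 > 0" by (simp add: moment_def)
    then show ?case using generic_moment by (intro exI[of _ "[moment n]"]) simp
  next
    case (insert e E)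
    obtain j k where e: "e = (j, k)" by fastforce
    obtain xs where xs: "xs \<noteq> []" "\<forall>x\<in>set xs. generic r n x \<and> x 1 > 0"
      "successively (adjacent r n) xs" "\<forall>(j, k)\<in>E. realises_type r n xs j k"
      using insert by auto
    have jk: "1 \<le> j" "j \<le> r - 2" "k + r + 1 \<le> n" using insert.prems e by auto
    obtain x0 x1 where x: "generic r n x0" "x0 1 > 0" "generic r n x1" "x1 1 > 0"
      and cross: "\<And>y. generic r n y \<Longrightarrow> same_chamber r n y x0 \<Longrightarrow>
        adjacent r n y x1 \<and> mutation_of_type r n (moment_config n y) (moment_config n x1) j k"
      using chamber_pair_of_type[OF r jk] by blast
    have "last xs \<in> set xs" using xs(1) by simp
    then obtain zs where zs: "zs \<noteq> []" "hd zs = last xs" "same_chamber r n (last zs) x0"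
      "successively (adjacent r n) zs" "\<forall>z\<in>set zs. generic r n z \<and> z 1 > 0"
      using chamber_walk[of n r "last xs" x0] xs(2) x(1,2) n r by auto
    define ys where "ys = xs @ tl zs"
    have last_ys: "last ys = last zs"
    proof (cases "tl zs = []")
      case True
      then have "zs = [hd zs]" using zs(1) by (metis list.collapse)
      then show ?thesis using True zs(2) by (metis append_Nil2 last.simps ys_def)
    next
      case False
      then show ?thesis by (simp add: ys_def last_tl)
    qed
    have "generic r n (last zs)" using zs(1,5) by simp
    then have step: "adjacent r n (last ys) x1"
      "mutation_of_type r n (moment_config n (last ys)) (moment_config n x1) j k"
      using cross zs(3) last_ys by auto
    have "successively (adjacent r n) ys"
      unfolding ys_def by (rule successively_append_tl[OF xs(3) zs(4,1,2)])
    then have "successively (adjacent r n) (ys @ [x1])"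
      using step(1) by (simp add: successively_append_iff)
    moreover have "\<forall>x\<in>set (ys @ [x1]). generic r n x \<and> x 1 > 0"
      using xs(2) zs(5) x(3,4) list.set_sel(2)[OF zs(1)] by (auto simp: ys_def)
    moreover have "realises_type r n (ys @ [x1]) j k"
    proof -
      have "ys \<noteq> []" using xs(1) by (simp add: ys_def)
      then have "Suc (length ys - 1) < length (ys @ [x1])" "(ys @ [x1]) ! (length ys - 1) = last ys"
        "(ys @ [x1]) ! Suc (length ys - 1) = x1" by (simp_all add: nth_append last_conv_nth)
      then show ?thesis using step(2) unfolding realises_type_def by metis
    qed
    moreover have "\<forall>(j, k)\<in>E. realises_type r n (ys @ [x1]) j k"
      using xs(4) realises_type_append unfolding ys_def by fastforce
    ultimately show ?case using e by (intro exI[of _ "ys @ [x1]"]) auto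
  qed
  then show ?thesis using that by blast
qed

lemma mutation_sequence_of_walk:
  assumes r: "1 \<le> r" and n: "r + 1 \<le> n" and xs: "xs \<noteq> []"
    "\<forall>x\<in>set xs. generic r n x \<and> x 1 > 0" "successively (adjacent r n) xs"
  defines "Vs \<equiv> \<lambda>t. moment_config n (xs ! t)" and "N \<equiv> length xs - 1"
  shows "\<forall>t\<le>N. pointed r n (Vs t) \<and> general_position r n (Vs t)"
    and "\<forall>t\<in>{1..N}. differ_by_mutation r n (Vs (t - 1)) (Vs t)"
    and "realises_type r n xs j k \<Longrightarrow> \<exists>t\<in>{1..N}. mutation_of_type r n (Vs (t - 1)) (Vs t) j k"
proof -
  show "\<forall>t\<le>N. pointed r n (Vs t) \<and> general_position r n (Vs t)"
  proof (intro allI impI)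
    fix t assume "t \<le> N"
    moreover have "length xs > 0" using xs(1) by simp
    ultimately have "t < length xs" unfolding N_def by linarith
    then have "xs ! t \<in> set xs" by simp
    then show "pointed r n (Vs t) \<and> general_position r n (Vs t)"
      using xs(2) pointed_moment_config[OF r] general_position_moment_config[OF r] by (simp add: Vs_def)
  qed
  show "\<forall>t\<in>{1..N}. differ_by_mutation r n (Vs (t - 1)) (Vs t)"
  proof
    fix t assume "t \<in> {1..N}"
    then have "Suc (t - 1) < length xs" by (auto simp: N_def)
    then have "adjacent r n (xs ! (t - 1)) (xs ! Suc (t - 1))" using successively_nth[OF xs(3)] by blast
    then show "differ_by_mutation r n (Vs (t - 1)) (Vs t)"
      using differ_by_mutation_of_wall_crossing[OF r n] \<open>t \<in> {1..N}\<close>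
      by (auto simp: adjacent_def Vs_def)
  qed
  show "\<exists>t\<in>{1..N}. mutation_of_type r n (Vs (t - 1)) (Vs t) j k" if rt: "realises_type r n xs j k"
  proof -
    obtain l where "Suc l < length xs"
      "mutation_of_type r n (moment_config n (xs ! l)) (moment_config n (xs ! Suc l)) j k"
      using rt by (auto simp: realises_type_def)
    then show ?thesis by (intro bexI[of _ "Suc l"]) (auto simp: Vs_def N_def)
  qed
qed

lemma no_types_if_small:
  assumes "r \<le> n" "\<not> (3 \<le> r \<and> r + 1 \<le> n)"
  shows "\<not> (1 \<le> j \<and> j \<le> (r - 1) div 2 \<and> int k \<le> (int n - int r - 1) div 2)"
  using assms by presburger

theorem lemma4p3:
  fixes n r :: nat
  assumes "1 \<le> r" and "r \<le> n"
  shows "\<exists>(Vs :: nat \<Rightarrow> config) (N :: nat).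
           (\<forall>t\<le>N. pointed r n (Vs t) \<and> general_position r n (Vs t)) \<and>
           (\<forall>t\<in>{1..N}. differ_by_mutation r n (Vs (t - 1)) (Vs t)) \<and>
           (\<forall>j k. 1 \<le> j \<and> j \<le> (r - 1) div 2 \<and> int k \<le> (int n - int r - 1) div 2 \<longrightarrow>
              (\<exists>t\<in>{1..N}. mutation_of_type r n (Vs (t - 1)) (Vs t) j k))"
proof (cases "3 \<le> r \<and> r + 1 \<le> n")
  case True
  define E where "E = {(j, k). 1 \<le> j \<and> j \<le> (r - 1) div 2 \<and> k + r + 1 \<le> n}"
  have "finite E" by (rule finite_subset[of _ "{..r} \<times> {..n}"]) (auto simp: E_def)
  moreover have "(r - 1) div 2 \<le> r - 2" using True by presburger
  then have "\<forall>(j, k)\<in>E. 1 \<le> j \<and> j \<le> r - 2 \<and> k + r + 1 \<le> n" by (auto simp: E_def)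
  ultimately obtain xs where xs: "xs \<noteq> []" "\<forall>x\<in>set xs. generic r n x \<and> x 1 > 0"
    "successively (adjacent r n) xs" "\<forall>(j, k)\<in>E. realises_type r n xs j k"
    using walk_realising_types[of r n E] True by blast
  have "(j, k) \<in> E" if "1 \<le> j \<and> j \<le> (r - 1) div 2 \<and> int k \<le> (int n - int r - 1) div 2" for j k
  proof -
    have "k + r + 1 \<le> n" using that by presburger
    then show ?thesis using that by (simp add: E_def)
  qed
  then have "\<forall>j k. 1 \<le> j \<and> j \<le> (r - 1) div 2 \<and> int k \<le> (int n - int r - 1) div 2 \<longrightarrow>
      realises_type r n xs j k" using xs(4) by blast
  then show ?thesis
    using mutation_sequence_of_walk[OF assms(1) _ xs(1-3)] True
    by (intro exI[of _ "\<lambda>t. moment_config n (xs ! t)"] exI[of _ "length xs - 1"]) blast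
next
  case False
  let ?V = "moment_config n (moment n)"
  have "pointed r n ?V" "general_position r n ?V"
    using pointed_moment_config general_position_moment_config generic_moment assms(1)
    by (auto simp: moment_def)
  then show ?thesis using no_types_if_small[OF assms(2) False] by (intro exI[of _ "\<lambda>_. ?V"] exI[of _ 0]) auto
qed

end
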